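(* Let $\mathcal H,\mathcal U$ be Hilbert spaces, $H,H_n$ ($n\in\mathbb{N}$) lower semibounded self-adjoint operators on $\mathcal H$ with a common lower bound $a\in\mathbb{R}$ such that $\mathrm e^{-tH_n}\to\mathrm e^{-tH}$ strongly for all $t>0$, and $B,B_n$ bounded operators $\mathcal U\to\mathcal H$ with $B_n\to B$ and $B_n^*\to B^*$ strongly. Let $T>0$ and let $\mathcal B^T f=\int_0^T\mathrm e^{-(T-s)H}Bf(s)\,\mathrm ds$, $\mathcal B^T_n f=\int_0^T\mathrm e^{-(T-s)H_n}B_nf(s)\,\mathrm ds$ for $f\in L^2((0,T),\mathcal U)$. For each $n$ let $F_n\colon\mathcal H\to L^2((0,T),\mathcal U)$ be a bounded linear operator with $\mathrm e^{-TH_n}+\mathcal B^T_nF_n=0$, and suppose $(F_n)_n$ converges weakly to some $F\colon\mathcal H\to L^2((0,T),\mathcal U)$ (i.e. $F_nu_0\to Fu_0$ weakly for every $u_0\in\mathcal H$). Then $\mathrm e^{-TH}+\mathcal B^TF=0$, i.e. $F$ is a feedback operator for the system $\partial_tu+Hu=Bf$.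
   Context: Integrals are understood in the weak sense. A map $F\colon\mathcal H\to L^2((0,T),\mathcal U)$ is a feedback operator for $\partial_tu+Hu=Bf$ if $\mathrm e^{-TH}+\mathcal B^TF=0$, i.e. $F$ maps each initial datum $u_0$ to a null-control (a control $f$ with $\mathrm e^{-TH}u_0+\mathcal B^Tf=0$). *)

theory Defs
  imports "HOL-Analysis.Analysis"
begin

text \<open>Hilbert spaces are modelled as (real) types of class real_inner and complete_space.
  The semigroup e^{-tH} of a self-adjoint operator H with lower bound a is modelled by
  a strongly continuous semigroup S of bounded self-adjoint operators with
  norm bound exp(-a t); these are exactly the semigroups e^{-tH} with H self-adjoint, H \<ge> a.\<close>

definition selfadj_semigroup ::
  "real \<Rightarrow> (real \<Rightarrow> 'h::{real_inner,complete_space} \<Rightarrow> 'h) \<Rightarrow> bool" where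
  "selfadj_semigroup a S \<longleftrightarrow>
     (\<forall>t\<ge>0. bounded_linear (S t)) \<and>
     S 0 = id \<and>
     (\<forall>t\<ge>0. \<forall>s\<ge>0. S (t + s) = S t \<circ> S s) \<and>
     (\<forall>x. continuous_on {0..} (\<lambda>t. S t x)) \<and>
     (\<forall>t\<ge>0. \<forall>x y. inner (S t x) y = inner x (S t y)) \<and>
     (\<forall>t\<ge>0. \<forall>x. norm (S t x) \<le> exp (- a * t) * norm x)"

definition L2 :: "real \<Rightarrow> (real \<Rightarrow> 'u::real_normed_vector) \<Rightarrow> bool" where
  "L2 T f \<longleftrightarrow> set_borel_measurable lborel {0<..<T} f \<and>
              set_integrable lborel {0<..<T} (\<lambda>s. (norm (f s))\<^sup>2)"

definition L2_inner :: "real \<Rightarrow> (real \<Rightarrow> 'u::real_inner) \<Rightarrow> (real \<Rightarrow> 'u) \<Rightarrow> real" where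
  "L2_inner T f g = (LINT s:{0<..<T}|lborel. inner (f s) (g s))"

definition L2_norm_sq :: "real \<Rightarrow> (real \<Rightarrow> 'u::real_normed_vector) \<Rightarrow> real" where
  "L2_norm_sq T f = (LINT s:{0<..<T}|lborel. (norm (f s))\<^sup>2)"

definition bounded_linear_L2 :: "real \<Rightarrow> ('h::real_normed_vector \<Rightarrow> real \<Rightarrow> 'u::real_normed_vector) \<Rightarrow> bool" where
  "bounded_linear_L2 T F \<longleftrightarrow>
     (\<forall>x. L2 T (F x)) \<and>
     (\<forall>x y. AE s in lborel. s \<in> {0<..<T} \<longrightarrow> F (x + y) s = F x s + F y s) \<and>
     (\<forall>c x. AE s in lborel. s \<in> {0<..<T} \<longrightarrow> F (c *\<^sub>R x) s = c *\<^sub>R F x s) \<and>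
     (\<exists>C. \<forall>x. L2_norm_sq T (F x) \<le> C * (norm x)\<^sup>2)"

definition L2_weak_conv :: "real \<Rightarrow> (nat \<Rightarrow> real \<Rightarrow> 'u::real_inner) \<Rightarrow> (real \<Rightarrow> 'u) \<Rightarrow> bool" where
  "L2_weak_conv T fs f \<longleftrightarrow>
     (\<forall>g. L2 T g \<longrightarrow> (\<lambda>n. L2_inner T (fs n) g) \<longlonglongrightarrow> L2_inner T f g)"

text \<open>The identity  e^{-TH} u0 + B^T f = 0, with B^T f = \<integral>_0^T e^{-(T-s)H} B f(s) ds
  understood as a weak integral.\<close>
definition null_control_eq ::
  "(real \<Rightarrow> 'h::real_inner \<Rightarrow> 'h) \<Rightarrow> ('u \<Rightarrow> 'h) \<Rightarrow> real \<Rightarrow> 'h \<Rightarrow> (real \<Rightarrow> 'u) \<Rightarrow> bool" where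
  "null_control_eq S B T u0 f \<longleftrightarrow>
     (\<forall>y. inner (S T u0) y + (LINT s:{0<..<T}|lborel. inner (S (T - s) (B (f s))) y) = 0)"

definition feedback_operator ::
  "(real \<Rightarrow> 'h::real_inner \<Rightarrow> 'h) \<Rightarrow> ('u \<Rightarrow> 'h) \<Rightarrow> real \<Rightarrow> ('h \<Rightarrow> real \<Rightarrow> 'u) \<Rightarrow> bool" where
  "feedback_operator S B T F \<longleftrightarrow> (\<forall>u0. null_control_eq S B T u0 (F u0))"

end

theory Submission
  imports Defs
begin

text \<open>Pairing the null-control identity for \<open>S\<^sub>n, B\<^sub>n, F\<^sub>n u\<^sub>0\<close> with \<open>y\<close> and using self-adjointness of
  the semigroup, it reads \<open>\<langle>S\<^sub>n(T) u\<^sub>0, y\<rangle> + \<langle>F\<^sub>n u\<^sub>0, B\<^sub>n\<^sup>* S\<^sub>n(T - \<cdot>) y\<rangle> = 0\<close> with the second pairing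
  taken in \<open>L\<^sup>2(0, T)\<close>. The observation functions \<open>B\<^sub>n\<^sup>* S\<^sub>n(T - \<cdot>) y\<close> converge to
  \<open>B\<^sup>* S(T - \<cdot>) y\<close> in \<open>L\<^sup>2\<close> by dominated convergence, the \<open>B\<^sub>n\<^sup>*\<close> being uniformly bounded by the
  uniform boundedness principle, while \<open>F\<^sub>n u\<^sub>0\<close> converges weakly. A weakly convergent sequence
  paired with a strongly convergent one converges to the pairing of the limits, which gives the
  identity for \<open>S, B, F u\<^sub>0\<close>.

  Since \<open>L\<^sup>2((0, T), U)\<close> is handled through representatives rather than as a Hilbert space, the
  boundedness of weakly convergent sequences behind this step is proved directly, by a gliding hump
  argument on fast converging series of continuous functions.\<close>

section \<open>Hilbert spaces\<close>

lemma minimizing_sequence_Cauchy: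
  fixes K :: "'a::real_inner set"
  assumes K: "subspace K" and ks_K: "\<And>n. ks n \<in> K"
    and D2_le: "\<And>k. k \<in> K \<Longrightarrow> D2 \<le> (norm (x - k))\<^sup>2"
    and ks_D2: "\<And>n. (norm (x - ks n))\<^sup>2 < D2 + 1 / Suc n"
  shows "Cauchy ks"
proof (rule CauchyI)
  \<comment> \<open>parallelogram law, with the midpoint of \<open>ks m\<close> and \<open>ks n\<close> lying in \<open>K\<close>\<close>
  have dist_ks: "(norm (ks m - ks n))\<^sup>2 \<le> 2 / Suc n + 2 / Suc m" for m n
  proof -
    have "(norm (ks m - ks n))\<^sup>2 + 4 * (norm (x - (1/2) *\<^sub>R (ks n + ks m)))\<^sup>2
        = 2 * (norm (x - ks n))\<^sup>2 + 2 * (norm (x - ks m))\<^sup>2"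
      by (simp add: power2_norm_eq_inner inner_add_left inner_add_right inner_diff_left
          inner_diff_right inner_commute algebra_simps)
    moreover have "D2 \<le> (norm (x - (1/2) *\<^sub>R (ks n + ks m)))\<^sup>2"
      using K ks_K by (intro D2_le subspace_scale subspace_add) auto
    ultimately show ?thesis using ks_D2[of n] ks_D2[of m] by linarith
  qed
  fix e :: real assume e: "0 < e"
  obtain M where M: "4 / Suc M < e\<^sup>2"
  proof -
    obtain M where "inverse (real (Suc M)) < e\<^sup>2 / 4"
      using reals_Archimedean e by (metis zero_less_power divide_pos_pos zero_less_numeral)
    then show ?thesis using that[of M] by (simp add: field_simps)
  qed
  show "\<exists>M. \<forall>m\<ge>M. \<forall>n\<ge>M. norm (ks m - ks n) < e"
  proof (intro exI allI impI)
    fix m n assume "M \<le> m" "M \<le> n"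
    then have "2 / Suc n \<le> 2 / Suc M" "2 / Suc m \<le> 2 / Suc M" by (auto simp: frac_le)
    then have "(norm (ks m - ks n))\<^sup>2 < e\<^sup>2"
      using dist_ks[of m n] M by linarith
    then show "norm (ks m - ks n) < e" using e by (simp add: power_less_imp_less_base)
  qed
qed

lemma hilbert_nearest_point_closed_subspace:
  fixes K :: "'a::{real_inner,complete_space} set"
  assumes K: "closed K" "subspace K"
  obtains p where "p \<in> K" "\<And>k. k \<in> K \<Longrightarrow> norm (x - p) \<le> norm (x - k)"
proof -
  define D2 where "D2 = (INF k\<in>K. (norm (x - k))\<^sup>2)"
  have bdd: "bdd_below ((\<lambda>k. (norm (x - k))\<^sup>2) ` K)"
    by (auto intro: bdd_belowI[of _ 0])
  have D2_le: "D2 \<le> (norm (x - k))\<^sup>2" if "k \<in> K" for k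
    unfolding D2_def using bdd that by (rule cINF_lower)
  have "\<exists>k\<in>K. (norm (x - k))\<^sup>2 < D2 + 1 / Suc n" for n
  proof -
    have "D2 < D2 + 1 / Suc n" by simp
    then show ?thesis
      unfolding D2_def using subspace_0[OF K(2)] by (subst (asm) cINF_less_iff[OF _ bdd]) auto
  qed
  then obtain ks where ks_K: "\<And>n. ks n \<in> K" and ks_D2: "\<And>n. (norm (x - ks n))\<^sup>2 < D2 + 1 / Suc n"
    by metis
  have "Cauchy ks" using K(2) ks_K D2_le ks_D2 by (rule minimizing_sequence_Cauchy)
  then obtain p where p: "ks \<longlonglongrightarrow> p" using Cauchy_convergent_iff convergent_def by blast
  have "p \<in> K" using closed_sequentially[OF K(1)] ks_K p by blast
  moreover have "(norm (x - p))\<^sup>2 \<le> D2"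
  proof (rule LIMSEQ_le)
    show "(\<lambda>n. (norm (x - ks n))\<^sup>2) \<longlonglongrightarrow> (norm (x - p))\<^sup>2"
      by (intro tendsto_intros p)
    show "(\<lambda>n. D2 + 1 / Suc n) \<longlonglongrightarrow> D2"
      using tendsto_add[OF tendsto_const LIMSEQ_inverse_real_of_nat] by (simp add: inverse_eq_divide)
    show "\<exists>N. \<forall>n\<ge>N. (norm (x - ks n))\<^sup>2 \<le> D2 + 1 / Suc n" using ks_D2 less_imp_le by blast
  qed
  then have "norm (x - p) \<le> norm (x - k)" if "k \<in> K" for k
    using D2_le[OF that] by (meson order_trans power2_le_imp_le norm_ge_zero)
  ultimately show ?thesis using that by blast
qed

lemma nearest_point_orthogonal:
  fixes K :: "'a::real_inner set"
  assumes K: "subspace K" and p: "p \<in> K" "\<And>k. k \<in> K \<Longrightarrow> norm (x - p) \<le> norm (x - k)"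
    and k: "k \<in> K"
  shows "inner (x - p) k = 0"
proof (rule ccontr)
  define z where "z = x - p"
  assume zk: "inner (x - p) k \<noteq> 0"
  then have "k \<noteq> 0" by auto
  define t where "t = inner z k / (norm k)\<^sup>2"
  have "p + t *\<^sub>R k \<in> K" using K p(1) k by (intro subspace_add subspace_scale)
  then have "norm z \<le> norm (z - t *\<^sub>R k)" using p(2) by (fastforce simp: z_def algebra_simps)
  then have "(norm z)\<^sup>2 \<le> (norm (z - t *\<^sub>R k))\<^sup>2" by (simp add: power_mono)
  also have "\<dots> = (norm z)\<^sup>2 - 2 * t * inner z k + t\<^sup>2 * (norm k)\<^sup>2"
    by (simp only: power2_norm_eq_inner)
      (simp add: inner_diff_left inner_diff_right inner_commute algebra_simps power2_eq_square)
  also have "\<dots> = (norm z)\<^sup>2 - (inner z k)\<^sup>2 / (norm k)\<^sup>2"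
    using \<open>k \<noteq> 0\<close> by (simp add: t_def field_simps power2_eq_square)
  finally have "(inner z k)\<^sup>2 / (norm k)\<^sup>2 \<le> 0" by simp
  moreover have "0 < (inner z k)\<^sup>2 / (norm k)\<^sup>2" using zk \<open>k \<noteq> 0\<close> by (simp add: z_def)
  ultimately show False by linarith
qed

lemma riesz_representation:
  fixes \<phi> :: "'a::{real_inner,complete_space} \<Rightarrow> real"
  assumes "bounded_linear \<phi>"
  obtains w where "\<And>x. \<phi> x = inner x w"
proof (cases "\<forall>x. \<phi> x = 0")
  case True then show ?thesis using that[of 0] by simp
next
  case False
  interpret bounded_linear \<phi> by fact
  define K where "K = {x. \<phi> x = 0}"
  have K: "closed K" "subspace K"
    unfolding K_def subspace_def
    by (auto intro!: closed_Collect_eq continuous_on_const linear_continuous_on assms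
        simp: add scale)
  obtain x1 where "\<phi> x1 \<noteq> 0" using False by auto
  define x0 where "x0 = x1 /\<^sub>R \<phi> x1"
  obtain p where p: "p \<in> K" "\<And>k. k \<in> K \<Longrightarrow> norm (x0 - p) \<le> norm (x0 - k)"
    using hilbert_nearest_point_closed_subspace[OF K] by blast
  define z where "z = x0 - p"
  have "\<phi> z = 1" using p(1) \<open>\<phi> x1 \<noteq> 0\<close> by (simp add: z_def x0_def diff scale K_def)
  have "inner x z = \<phi> x * (norm z)\<^sup>2" for x
  proof -
    have "x - \<phi> x *\<^sub>R z \<in> K" using \<open>\<phi> z = 1\<close> by (simp add: K_def diff scale)
    from nearest_point_orthogonal[OF K(2) p this] show ?thesis
      by (simp add: z_def[symmetric] inner_diff_right inner_commute power2_norm_eq_inner)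
  qed
  moreover have "z \<noteq> 0" using \<open>\<phi> z = 1\<close> by auto
  ultimately show ?thesis by (intro that[of "z /\<^sub>R (norm z)\<^sup>2"]) simp
qed

lemma hilbert_adjoint_works:
  fixes f :: "'a::{real_inner,complete_space} \<Rightarrow> 'b::real_inner"
  assumes "bounded_linear f"
  shows "inner (f x) y = inner x (adjoint f y)"
proof -
  have "\<exists>w. \<forall>x. inner (f x) y = inner x w" for y
    using riesz_representation[OF bounded_linear_compose[OF bounded_linear_inner_left assms]]
    by metis
  then have "\<exists>f'. \<forall>x y. inner (f x) y = inner x (f' y)" by metis
  then show ?thesis unfolding adjoint_def by (rule someI2_ex) blast
qed

lemma hilbert_adjoint_bounded_linear:
  fixes f :: "'a::{real_inner,complete_space} \<Rightarrow> 'b::real_inner"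
  assumes "bounded_linear f"
  shows "bounded_linear (adjoint f)"
proof -
  interpret bounded_linear f by fact
  note adj = hilbert_adjoint_works[OF assms]
  have add: "adjoint f (a + b) = adjoint f a + adjoint f b" for a b
  proof -
    have "inner x (adjoint f (a + b) - (adjoint f a + adjoint f b)) = 0" for x
      by (simp add: inner_diff_right inner_add_right flip: adj)
    from this[of "adjoint f (a + b) - (adjoint f a + adjoint f b)"] show ?thesis by simp
  qed
  have scale: "adjoint f (c *\<^sub>R a) = c *\<^sub>R adjoint f a" for a c
  proof -
    have "inner x (adjoint f (c *\<^sub>R a) - c *\<^sub>R adjoint f a) = 0" for x
      by (simp add: inner_diff_right flip: adj)
    from this[of "adjoint f (c *\<^sub>R a) - c *\<^sub>R adjoint f a"] show ?thesis by simp
  qed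
  obtain K where K: "\<And>x. norm (f x) \<le> norm x * K" "K > 0" using pos_bounded by blast
  have "norm (adjoint f y) \<le> norm y * K" for y
  proof (cases "adjoint f y = 0")
    case True then show ?thesis using K by simp
  next
    case False
    have "(norm (adjoint f y))\<^sup>2 = inner (f (adjoint f y)) y"
      by (simp add: adj power2_norm_eq_inner)
    also have "\<dots> \<le> norm (f (adjoint f y)) * norm y"
      by (rule Cauchy_Schwarz_ineq2[THEN order_trans[OF abs_ge_self]])
    also have "\<dots> \<le> norm (adjoint f y) * K * norm y" using K by (simp add: mult_right_mono)
    finally have "norm (adjoint f y) * norm (adjoint f y) \<le> norm (adjoint f y) * (norm y * K)"
      by (simp add: power2_eq_square mult_ac)
    then show ?thesis using False by simp
  qed
  then show ?thesis by (intro bounded_linear_intro[where K=K]) (auto simp: add scale)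
qed

section \<open>Uniform boundedness\<close>

lemma baire_pointwise_bounded_on_ball:
  fixes A :: "'i \<Rightarrow> 'a::{real_normed_vector,complete_space} \<Rightarrow> 'b::real_normed_vector"
  assumes "\<And>i. bounded_linear (A i)" and "\<And>x. bounded (range (\<lambda>i. A i x))"
  shows "\<exists>r x0 m. r > 0 \<and> (\<forall>x\<in>ball x0 r. \<forall>i. norm (A i x) \<le> m)"
proof -
  define E where "E m = {x. \<forall>i. norm (A i x) \<le> real m}" for m :: nat
  have closed_E: "closed (E m)" for m
  proof -
    have "E m = (\<Inter>i. {x. norm (A i x) \<le> real m})" by (auto simp: E_def)
    moreover have "closed {x. norm (A i x) \<le> real m}" for i
      by (intro closed_Collect_le continuous_on_norm continuous_on_const linear_continuous_on assms)
    ultimately show ?thesis by auto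
  qed
  have cover: "(\<Union>m. E m) = UNIV"
  proof -
    have "\<exists>m. x \<in> E m" for x
    proof -
      obtain M where "\<forall>i. norm (A i x) \<le> M" using assms(2)[of x] by (auto simp: bounded_iff)
      moreover obtain m :: nat where "M \<le> real m" using real_arch_simple by blast
      ultimately show ?thesis by (auto simp: E_def intro: order_trans)
    qed
    then show ?thesis by auto
  qed
  have "\<exists>m. interior (E m) \<noteq> {}"
  proof (rule ccontr)
    assume "\<not> ?thesis"
    then have "euclidean interior_of \<Union>(range E) = {}"
      by (intro Baire_category_alt)
        (auto simp: completely_metrizable_space_euclidean closed_E euclidean_interior_of)
    then show False using cover by (simp add: euclidean_interior_of)
  qed
  then obtain m x0 where "x0 \<in> interior (E m)" by blast
  then obtain r where "r > 0" "ball x0 r \<subseteq> E m" using mem_interior by blast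
  then show ?thesis by (intro exI[of _ r] exI[of _ x0] exI[of _ "real m"]) (auto simp: E_def)
qed

theorem uniform_boundedness:
  fixes A :: "'i \<Rightarrow> 'a::{real_normed_vector,complete_space} \<Rightarrow> 'b::real_normed_vector"
  assumes bl: "\<And>i. bounded_linear (A i)" and "\<And>x. bounded (range (\<lambda>i. A i x))"
  obtains C where "\<And>i x. norm (A i x) \<le> C * norm x"
proof -
  obtain r x0 m where r: "r > 0" and m: "\<And>x i. x \<in> ball x0 r \<Longrightarrow> norm (A i x) \<le> m"
    using baire_pointwise_bounded_on_ball[OF assms] by blast
  have "norm (A i x) \<le> (4 * m / r) * norm x" for i x
  proof (cases "x = 0")
    case True then show ?thesis using bl[of i] by (simp add: linear_simps)
  next
    case False
    interpret bounded_linear "A i" by (rule bl)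
    define z where "z = (r / 2 / norm x) *\<^sub>R x"
    have "norm z = r / 2" using False r by (simp add: z_def)
    then have "x0 + z \<in> ball x0 r" "x0 \<in> ball x0 r" using r by (simp_all add: dist_norm)
    then have "norm (A i (x0 + z)) \<le> m" "norm (A i x0) \<le> m" by (simp_all add: m)
    then have Az: "norm (A i z) \<le> 2 * m"
      using norm_triangle_ineq4[of "A i (x0 + z)" "A i x0"] by (simp add: add)
    have "x = (2 * norm x / r) *\<^sub>R z" using False r by (simp add: z_def)
    then have "A i x = (2 * norm x / r) *\<^sub>R A i z" by (metis scale)
    then have "norm (A i x) = (2 * norm x / r) * norm (A i z)" using r by simp
    also have "\<dots> \<le> (2 * norm x / r) * (2 * m)" using Az r by (intro mult_left_mono) auto
    also have "\<dots> = (4 * m / r) * norm x" by (simp add: field_simps)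
    finally show ?thesis .
  qed
  then show ?thesis using that by blast
qed

lemma tendsto_apply_uniformly_bounded:
  fixes A :: "nat \<Rightarrow> 'a::real_normed_vector \<Rightarrow> 'b::real_normed_vector"
  assumes A: "\<And>n. bounded_linear (A n)" and bound: "\<And>n x. norm (A n x) \<le> C * norm x"
    and A_lim: "(\<lambda>n. A n x) \<longlonglongrightarrow> A0 x" and xs: "xs \<longlonglongrightarrow> x"
  shows "(\<lambda>n. A n (xs n)) \<longlonglongrightarrow> A0 x"
proof -
  have C: "norm (A n z) \<le> max C 0 * norm z" for n z
    using bound[of n z] mult_right_mono[of C "max C 0" "norm z"] by simp
  have majorant: "(\<lambda>n. max C 0 * norm (xs n - x) + norm (A n x - A0 x)) \<longlonglongrightarrow> 0"
    using tendsto_add[OF tendsto_mult_right_zero[OF tendsto_norm_zero[OF LIM_zero[OF xs]]]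
        tendsto_norm_zero[OF LIM_zero[OF A_lim]]] by simp
  have bound_n: "norm (A n (xs n) - A0 x) \<le> max C 0 * norm (xs n - x) + norm (A n x - A0 x)" for n
  proof -
    have split: "A n (xs n) - A0 x = A n (xs n - x) + (A n x - A0 x)" by (simp add: linear_simps[OF A])
    have "norm (A n (xs n) - A0 x) \<le> norm (A n (xs n - x)) + norm (A n x - A0 x)"
      unfolding split by (rule norm_triangle_ineq)
    with C[of n "xs n - x"] show ?thesis by linarith
  qed
  have "(\<lambda>n. A n (xs n) - A0 x) \<longlonglongrightarrow> 0"
    by (rule Lim_null_comparison[OF _ majorant]) (intro always_eventually allI bound_n)
  then show ?thesis by (simp add: LIM_zero_iff)
qed

section \<open>Series\<close>

lemma mult_le_weighted_squares:
  fixes x y t :: real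
  assumes "t > 0"
  shows "x * y \<le> (t * x\<^sup>2 + y\<^sup>2 / t) / 2"
proof -
  have "(t * x\<^sup>2 + y\<^sup>2 / t) / 2 - x * y = (t * x - y)\<^sup>2 / (2 * t)"
    using assms by (simp add: field_simps power2_eq_square)
  moreover have "(t * x - y)\<^sup>2 / (2 * t) \<ge> 0" using assms by simp
  ultimately show ?thesis by linarith
qed

lemma abs_inner_le_weighted_norms:
  fixes x y :: "'a::real_inner"
  assumes "t > 0"
  shows "\<bar>inner x y\<bar> \<le> (t * (norm x)\<^sup>2 + (norm y)\<^sup>2 / t) / 2"
  using Cauchy_Schwarz_ineq2[of x y] mult_le_weighted_squares[OF assms, of "norm x" "norm y"]
  by linarith

lemma le_weighted_square:
  fixes y c :: real
  assumes "c > 0"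
  shows "y \<le> (c * (1/2)^k + 2^k * y\<^sup>2 / c) / 2"
proof -
  have "1 * y \<le> (c * (1/2)^k * 1\<^sup>2 + y\<^sup>2 / (c * (1/2)^k)) / 2"
    using assms by (intro mult_le_weighted_squares) simp
  moreover have "y\<^sup>2 / (c * (1/2)^k) = 2^k * y\<^sup>2 / c" by (simp add: power_one_over field_simps)
  ultimately show ?thesis by simp
qed

lemma sq_le_if_le_add_divide:
  fixes x W :: real
  assumes x: "x \<ge> 0" and W: "W \<ge> 0" and le: "\<And>c. c > 0 \<Longrightarrow> x \<le> c + W / (2 * c)"
  shows "x\<^sup>2 \<le> 2 * W"
proof (cases "W = 0")
  case True
  have "x \<le> 0"
  proof (rule field_le_epsilon)
    fix c :: real assume "0 < c" then show "x \<le> 0 + c" using le[of c] True by simp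
  qed
  then show ?thesis using x True by simp
next
  case False
  define c where "c = sqrt (W / 2)"
  have c: "c > 0" "c * c = W / 2" using False W by (auto simp: c_def)
  have "c + W / (2 * c) = 2 * c" using c by (simp add: field_simps)
  then have "x \<le> 2 * c" using le[OF c(1)] by linarith
  then have "x\<^sup>2 \<le> (2 * c)\<^sup>2" using x by (intro power_mono)
  also have "\<dots> = 2 * W" using c by (simp add: power2_eq_square algebra_simps)
  finally show ?thesis .
qed

lemma summable_if_weighted_squares_summable:
  fixes r :: "nat \<Rightarrow> real"
  assumes r: "\<And>k. r k \<ge> 0" and W: "summable (\<lambda>k. 2^k * (r k)\<^sup>2)"
  shows "summable r" and "(\<Sum>k. r k)\<^sup>2 \<le> 2 * (\<Sum>k. 2^k * (r k)\<^sup>2)"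
proof -
  define W where "W = (\<Sum>k. 2^k * (r k)\<^sup>2)"
  have geom: "summable (\<lambda>k. (1/2::real)^k)" by (rule summable_geometric) simp
  have bound_summable: "summable (\<lambda>k. (c * (1/2)^k + 2^k * (r k)\<^sup>2 / c) / 2)" for c
    using geom W by (intro summable_divide summable_add summable_mult) auto
  show "summable r"
    using le_weighted_square[of 1] r
    by (intro summable_comparison_test[OF _ bound_summable[of 1]]) auto
  have "(\<Sum>k. r k) \<le> c + W / (2 * c)" if c: "c > 0" for c
  proof -
    have s1: "summable (\<lambda>k. c * (1/2::real)^k)" using geom by (rule summable_mult)
    have s2: "summable (\<lambda>k. 2^k * (r k)\<^sup>2 / c)" using W by (rule summable_divide)
    have "(\<Sum>k. r k) \<le> (\<Sum>k. (c * (1/2)^k + 2^k * (r k)\<^sup>2 / c) / 2)"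
      using le_weighted_square[OF c] \<open>summable r\<close> by (intro suminf_le bound_summable) auto
    also have "\<dots> = ((\<Sum>k. c * (1/2::real)^k) + (\<Sum>k. 2^k * (r k)\<^sup>2 / c)) / 2"
      by (simp add: suminf_divide[OF summable_add[OF s1 s2]] suminf_add[OF s1 s2])
    also have "\<dots> = c + W / (2 * c)"
      by (simp add: suminf_mult[OF geom] suminf_divide[OF W] W_def suminf_geometric)
    finally show ?thesis .
  qed
  moreover have "W \<ge> 0" unfolding W_def using W r by (intro suminf_nonneg) auto
  moreover have "(\<Sum>k. r k) \<ge> 0" using \<open>summable r\<close> r by (intro suminf_nonneg)
  ultimately show "(\<Sum>k. r k)\<^sup>2 \<le> 2 * (\<Sum>k. 2^k * (r k)\<^sup>2)"
    unfolding W_def by (intro sq_le_if_le_add_divide)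
qed

lemma summable_norm_cancel_complete:
  fixes f :: "nat \<Rightarrow> 'a::{real_normed_vector,complete_space}"
  assumes f: "summable (\<lambda>n. norm (f n))"
  shows "summable f"
proof (rule summable_bounded_partials)
  show "(\<lambda>a. (\<Sum>n. norm (f n)) - (\<Sum>n\<le>a. norm (f n))) \<longlonglongrightarrow> 0"
    using tendsto_diff[OF tendsto_const summable_LIMSEQ'[OF f], of "\<Sum>n. norm (f n)"] by simp
  show "\<forall>\<^sub>F a0 in sequentially. \<forall>a\<ge>a0. \<forall>b>a.
      norm (sum f {a<..b}) \<le> (\<Sum>n. norm (f n)) - (\<Sum>n\<le>a. norm (f n))"
  proof (intro always_eventually allI impI)
    fix a b :: nat assume "a < b"
    have "{..b} - {..a} = {a<..b}" by auto
    then have "(\<Sum>n\<in>{a<..b}. norm (f n)) = (\<Sum>n\<le>b. norm (f n)) - (\<Sum>n\<le>a. norm (f n))"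
      using \<open>a < b\<close> sum_diff[of "{..b}" "{..a}" "\<lambda>n. norm (f n)"] by simp
    moreover have "(\<Sum>n\<le>b. norm (f n)) \<le> (\<Sum>n. norm (f n))"
      by (rule sum_le_suminf[OF f]) auto
    moreover have "norm (sum f {a<..b}) \<le> (\<Sum>n\<in>{a<..b}. norm (f n))" by (rule norm_sum)
    ultimately show "norm (sum f {a<..b}) \<le> (\<Sum>n. norm (f n)) - (\<Sum>n\<le>a. norm (f n))"
      by linarith
  qed
qed

lemma summable_norm_complete:
  fixes f :: "nat \<Rightarrow> 'a::{real_normed_vector,complete_space}"
  assumes f: "summable (\<lambda>n. norm (f n))"
  shows "norm (\<Sum>n. f n) \<le> (\<Sum>n. norm (f n))"
proof (rule LIMSEQ_le)
  show "(\<lambda>n. norm (\<Sum>k<n. f k)) \<longlonglongrightarrow> norm (\<Sum>n. f n)"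
    using summable_norm_cancel_complete[OF f] by (intro tendsto_norm summable_LIMSEQ)
  show "(\<lambda>n. \<Sum>k<n. norm (f k)) \<longlonglongrightarrow> (\<Sum>n. norm (f n))" by (rule summable_LIMSEQ[OF f])
  show "\<exists>N. \<forall>n\<ge>N. norm (\<Sum>k<n. f k) \<le> (\<Sum>k<n. norm (f k))" by (auto intro: norm_sum)
qed

lemma norm_suminf_sq_le_weighted:
  fixes x :: "nat \<Rightarrow> 'u::{real_normed_vector,complete_space}"
  assumes "summable (\<lambda>k. 2^k * (norm (x k))\<^sup>2)"
  shows "summable (\<lambda>k. norm (x k))" and "(norm (\<Sum>k. x k))\<^sup>2 \<le> 2 * (\<Sum>k. 2^k * (norm (x k))\<^sup>2)"
proof -
  note weighted = summable_if_weighted_squares_summable[of "\<lambda>k. norm (x k)", OF norm_ge_zero assms]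
  show "summable (\<lambda>k. norm (x k))" by (fact weighted(1))
  have "(norm (\<Sum>k. x k))\<^sup>2 \<le> (\<Sum>k. norm (x k))\<^sup>2"
    using summable_norm_complete[OF weighted(1)] by (intro power_mono) auto
  with weighted(2) show "(norm (\<Sum>k. x k))\<^sup>2 \<le> 2 * (\<Sum>k. 2^k * (norm (x k))\<^sup>2)" by linarith
qed

lemma abs_suminf_restrict_ge:
  fixes r :: "nat \<Rightarrow> real"
  assumes r: "summable (\<lambda>k. \<bar>r k\<bar>)" and j: "j \<in> P" "j0 < j" "j < j1"
    and gaps: "\<And>k. k \<in> P \<Longrightarrow> k \<le> j0 \<or> k = j \<or> j1 \<le> k"
  shows "\<bar>r j\<bar> - (\<Sum>k\<le>j0. \<bar>r k\<bar>) - (\<Sum>k. \<bar>r (k + j1)\<bar>) \<le> \<bar>\<Sum>k. if k \<in> P then r k else 0\<bar>"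
proof -
  define x where "x k = (if k \<in> P then r k else 0)" for k
  have x_abs: "\<bar>x k\<bar> \<le> \<bar>r k\<bar>" for k by (simp add: x_def)
  have x_abs_summable: "summable (\<lambda>k. \<bar>x k\<bar>)"
    using x_abs by (intro summable_comparison_test[OF _ r]) auto
  then have "summable x" by (rule summable_rabs_cancel)
  then have split: "(\<Sum>k. x k) = (\<Sum>k. x (k + j1)) + (\<Sum>k<j1. x k)"
    by (rule suminf_split_initial_segment)
  have "(\<Sum>k<j1. x k) = (\<Sum>k\<in>insert j {..j0}. x k)"
    using j by (intro sum.mono_neutral_right) (auto simp: x_def dest: gaps)
  also have "\<dots> = x j + (\<Sum>k\<le>j0. x k)" using j by simp
  finally have head: "(\<Sum>k<j1. x k) = r j + (\<Sum>k\<le>j0. x k)" using j by (simp add: x_def)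
  have "\<bar>\<Sum>k\<le>j0. x k\<bar> \<le> (\<Sum>k\<le>j0. \<bar>r k\<bar>)"
    using x_abs by (intro order_trans[OF sum_abs] sum_mono)
  moreover have "\<bar>\<Sum>k. x (k + j1)\<bar> \<le> (\<Sum>k. \<bar>r (k + j1)\<bar>)"
  proof -
    have "summable (\<lambda>k. \<bar>x (k + j1)\<bar>)"
      using summable_ignore_initial_segment[OF x_abs_summable] by blast
    then have "\<bar>\<Sum>k. x (k + j1)\<bar> \<le> (\<Sum>k. \<bar>x (k + j1)\<bar>)" by (rule summable_rabs)
    also have "\<dots> \<le> (\<Sum>k. \<bar>r (k + j1)\<bar>)"
      using \<open>summable (\<lambda>k. \<bar>x (k + j1)\<bar>)\<close> x_abs
      by (intro suminf_le summable_ignore_initial_segment[OF r]) auto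
    finally show ?thesis .
  qed
  ultimately show ?thesis using split head by (simp add: x_def[symmetric])
qed

lemma gliding_hump_selection:
  fixes b :: "nat \<Rightarrow> nat \<Rightarrow> real" and M :: "nat \<Rightarrow> nat \<Rightarrow> real"
  assumes rows: "\<And>n. summable (\<lambda>k. \<bar>b n k\<bar>)"
    and unbounded: "\<And>j m. \<exists>n k. j < k \<and> m < \<bar>b n k\<bar>"
  shows "\<exists>N J. strict_mono J \<and> (\<forall>i. (\<Sum>k. \<bar>b (N i) (k + J (Suc i))\<bar>) \<le> 1)
    \<and> (\<forall>i. M i (J i) < \<bar>b (N (Suc i)) (J (Suc i))\<bar>)"
proof -
  define R where "R i q q' \<longleftrightarrow> snd q < snd q' \<and> (\<Sum>k. \<bar>b (fst q) (k + snd q')\<bar>) \<le> 1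
      \<and> M i (snd q) < \<bar>b (fst q') (snd q')\<bar>" for i q q'
  have "\<exists>q'. R i q q'" for i q
  proof -
    obtain j where j: "\<forall>j'\<ge>j. norm (\<Sum>k. \<bar>b (fst q) (k + j')\<bar>) < 1"
      using suminf_exist_split[OF _ rows[of "fst q"], of 1] by auto
    obtain n k where "max j (snd q) < k" "M i (snd q) < \<bar>b n k\<bar>"
      using unbounded by blast
    then show ?thesis using j[rule_format, of k] unfolding R_def
      by (intro exI[of _ "(n, k)"]) auto
  qed
  then obtain next_hump where next_hump: "\<And>i q. R i q (next_hump i q)" by metis
  define st where "st = rec_nat (0, 0) next_hump"
  have "R i (st i) (st (Suc i))" for i by (simp add: st_def next_hump)
  then have "strict_mono (snd \<circ> st)" by (intro strict_monoI_Suc) (simp add: R_def)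
  with \<open>\<And>i. R i (st i) (st (Suc i))\<close> show ?thesis
    by (intro exI[of _ "fst \<circ> st"] exI[of _ "snd \<circ> st"]) (simp add: R_def)
qed

lemma unbounded_beyond_every_column:
  fixes b :: "nat \<Rightarrow> nat \<Rightarrow> real"
  assumes columns: "\<And>n k. \<bar>b n k\<bar> \<le> c k" and unbounded: "\<nexists>C. \<forall>n k. \<bar>b n k\<bar> \<le> C"
  shows "\<exists>n k. j < k \<and> m < \<bar>b n k\<bar>"
proof -
  have "\<not> (\<forall>n k. \<bar>b n k\<bar> \<le> \<bar>m\<bar> + (\<Sum>l\<le>j. \<bar>c l\<bar>))" using unbounded by blast
  then obtain n k where nk: "\<bar>b n k\<bar> > \<bar>m\<bar> + (\<Sum>l\<le>j. \<bar>c l\<bar>)" by (auto simp: not_le)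
  have "j < k"
  proof (rule ccontr)
    assume "\<not> j < k"
    then have "\<bar>c k\<bar> \<le> (\<Sum>l\<le>j. \<bar>c l\<bar>)" by (intro member_le_sum) auto
    then show False using nk columns[of n k] abs_ge_self[of "c k"] abs_ge_zero[of m] by linarith
  qed
  moreover have "0 \<le> (\<Sum>l\<le>j. \<bar>c l\<bar>)" by (intro sum_nonneg) simp
  then have "m < \<bar>b n k\<bar>" using nk abs_ge_self[of m] by linarith
  ultimately show ?thesis by blast
qed

lemma gliding_hump_subseries_large:
  fixes b :: "nat \<Rightarrow> nat \<Rightarrow> real"
  assumes rows: "\<And>n. summable (\<lambda>k. \<bar>b n k\<bar>)" and columns: "\<And>n k. \<bar>b n k\<bar> \<le> c k"
    and J: "strict_mono J" and tail: "\<And>i. (\<Sum>k. \<bar>b (N i) (k + J (Suc i))\<bar>) \<le> 1"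
    and hump: "\<And>i. real i + 1 + (\<Sum>k\<le>J i. c k) < \<bar>b (N (Suc i)) (J (Suc i))\<bar>"
  shows "real i < \<bar>\<Sum>k. if k \<in> range J then b (N (Suc i)) k else 0\<bar>"
proof -
  have gaps: "k \<le> J i \<or> k = J (Suc i) \<or> J (Suc (Suc i)) \<le> k" if k: "k \<in> range J" for k
  proof -
    from k obtain l where k: "k = J l" by blast
    have "l \<le> i \<or> l = Suc i \<or> Suc (Suc i) \<le> l" by arith
    then show ?thesis unfolding k by (auto simp: strict_mono_less_eq[OF J])
  qed
  have "\<bar>b (N (Suc i)) (J (Suc i))\<bar> - (\<Sum>k\<le>J i. \<bar>b (N (Suc i)) k\<bar>)
      - (\<Sum>k. \<bar>b (N (Suc i)) (k + J (Suc (Suc i)))\<bar>)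
      \<le> \<bar>\<Sum>k. if k \<in> range J then b (N (Suc i)) k else 0\<bar>"
    by (rule abs_suminf_restrict_ge[OF rows _ _ _ gaps]) (simp_all add: strict_mono_less[OF J])
  moreover have "(\<Sum>k\<le>J i. \<bar>b (N (Suc i)) k\<bar>) \<le> (\<Sum>k\<le>J i. c k)"
    by (intro sum_mono columns)
  ultimately show ?thesis using tail[of "Suc i"] hump[of i] by linarith
qed

theorem gliding_hump:
  fixes b :: "nat \<Rightarrow> nat \<Rightarrow> real"
  assumes rows: "\<And>n. summable (\<lambda>k. \<bar>b n k\<bar>)"
    and subseries: "\<And>P. bounded (range (\<lambda>n. \<Sum>k. if k \<in> P then b n k else 0))"
  obtains C where "\<And>n k. \<bar>b n k\<bar> \<le> C"
proof -
  have "\<exists>C. \<forall>n k. \<bar>b n k\<bar> \<le> C"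
  proof (rule ccontr)
    assume unbounded: "\<nexists>C. \<forall>n k. \<bar>b n k\<bar> \<le> C"
    have "\<exists>c. \<forall>n. \<bar>b n k\<bar> \<le> c" for k
    proof -
      have "(\<Sum>j. if j \<in> {k} then b n j else 0) = b n k" for n
        using sums_single[of k "b n"] by (simp add: sums_iff)
      then show ?thesis using subseries[of "{k}"] by (auto simp: bounded_iff)
    qed
    then obtain c where c: "\<And>n k. \<bar>b n k\<bar> \<le> c k" by metis
    obtain N J where J: "strict_mono J"
      and tail: "\<And>i. (\<Sum>k. \<bar>b (N i) (k + J (Suc i))\<bar>) \<le> 1"
      and hump: "\<And>i. real i + 1 + (\<Sum>k\<le>J i. c k) < \<bar>b (N (Suc i)) (J (Suc i))\<bar>"
      using gliding_hump_selection[where b=b and M="\<lambda>i j. real i + 1 + (\<Sum>k\<le>j. c k)",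
          OF rows unbounded_beyond_every_column[OF c unbounded]] by auto
    obtain B where B: "\<And>n. \<bar>\<Sum>k. if k \<in> range J then b n k else 0\<bar> \<le> B"
      using subseries[of "range J"] by (auto simp: bounded_iff)
    obtain i :: nat where "B \<le> real i" using real_arch_simple by blast
    then show False
      using B[of "N (Suc i)"] gliding_hump_subseries_large[where b=b, OF rows c J tail hump, of i] by linarith
  qed
  then show ?thesis using that by blast
qed

section \<open>Square integrable functions on an interval\<close>

lemma L2_inner_altdef:
  "L2_inner T f g = (\<integral>s. indicator {0<..<T} s * inner (f s) (g s) \<partial>lborel)"
  by (simp add: L2_inner_def set_lebesgue_integral_def)

lemma L2_norm_sq_altdef:
  "L2_norm_sq T f = (\<integral>s. indicator {0<..<T} s * (norm (f s))\<^sup>2 \<partial>lborel)"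
  by (simp add: L2_norm_sq_def set_lebesgue_integral_def)

lemma L2_norm_sq_nonneg: "L2_norm_sq T f \<ge> 0"
  unfolding L2_norm_sq_altdef by (intro integral_nonneg_AE) auto

lemma L2_imp_integrable_norm_sq:
  "L2 T f \<Longrightarrow> integrable lborel (\<lambda>s. indicator {0<..<T} s * (norm (f s))\<^sup>2)"
  by (simp add: L2_def set_integrable_def)

lemma L2_imp_set_borel_measurable:
  "L2 T f \<Longrightarrow> set_borel_measurable lborel {0<..<T} f"
  by (simp add: L2_def)

lemma L2_inner_scaleR_right: "L2_inner T f (\<lambda>s. c *\<^sub>R g s) = c * L2_inner T f g"
  by (simp add: L2_inner_altdef mult.left_commute)

lemma L2_inner_zero_right: "L2_inner T f (\<lambda>s. 0) = 0"
  by (simp add: L2_inner_altdef)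

lemma L2_if_continuous_on_bounded:
  fixes p :: "real \<Rightarrow> 'u::real_normed_vector"
  assumes p: "continuous_on {0<..<T} p" and bound: "\<And>s. s \<in> {0<..<T} \<Longrightarrow> norm (p s) \<le> K"
  shows "L2 T p"
proof -
  define I where "I = {0<..<T::real}"
  have meas: "(\<lambda>s. indicator I s *\<^sub>R p s) \<in> borel_measurable lborel"
    using borel_measurable_continuous_on_indicator[of I p] p by (simp add: I_def)
  have sq: "indicator I s * (norm (p s))\<^sup>2 = (norm (indicator I s *\<^sub>R p s))\<^sup>2" for s
    by (cases "s \<in> I") simp_all
  have meas_sq: "(\<lambda>s. indicator I s * (norm (p s))\<^sup>2) \<in> borel_measurable lborel"
    unfolding sq using meas by measurable
  have "emeasure lborel I < \<infinity>" by (cases "0 \<le> T") (auto simp: I_def emeasure_lborel_Ioo)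
  then have "integrable lborel (\<lambda>s. indicator I s * K\<^sup>2)"
    by (intro integrable_mult_left integrable_real_indicator) (auto simp: I_def)
  then have "integrable lborel (\<lambda>s. indicator I s * (norm (p s))\<^sup>2)"
  proof (rule Bochner_Integration.integrable_bound[OF _ meas_sq], intro AE_I2)
    fix s
    have "s \<in> I \<Longrightarrow> (norm (p s))\<^sup>2 \<le> K\<^sup>2"
      using bound norm_ge_zero by (intro power_mono) (auto simp: I_def)
    then show "norm (indicator I s * (norm (p s))\<^sup>2) \<le> norm (indicator I s * K\<^sup>2)"
      by (cases "s \<in> I") auto
  qed
  with meas show ?thesis
    by (simp add: L2_def set_borel_measurable_def set_integrable_def I_def)
qed

lemma L2_scaleR:
  fixes f :: "real \<Rightarrow> 'u::real_normed_vector"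
  assumes "L2 T f"
  shows "L2 T (\<lambda>s. c *\<^sub>R f s)" and "L2_norm_sq T (\<lambda>s. c *\<^sub>R f s) = c\<^sup>2 * L2_norm_sq T f"
proof -
  have "(\<lambda>x::'u. c *\<^sub>R x) \<in> borel_measurable borel"
    by (intro borel_measurable_continuous_onI continuous_intros)
  from measurable_compose[OF L2_imp_set_borel_measurable[OF assms, unfolded set_borel_measurable_def] this]
  have "set_borel_measurable lborel {0<..<T} (\<lambda>s. c *\<^sub>R f s)"
    by (simp add: set_borel_measurable_def scaleR_left_commute[of c] mult.commute)
  moreover have "integrable lborel (\<lambda>s. indicator {0<..<T} s * (norm (c *\<^sub>R f s))\<^sup>2)"
    using integrable_mult_right[OF L2_imp_integrable_norm_sq[OF assms], of "c\<^sup>2"]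
    by (simp add: power_mult_distrib mult.left_commute)
  ultimately show "L2 T (\<lambda>s. c *\<^sub>R f s)" by (simp add: L2_def set_integrable_def)
  have "(\<lambda>s. indicator {0<..<T} s * (norm (c *\<^sub>R f s))\<^sup>2)
      = (\<lambda>s. c\<^sup>2 * (indicator {0<..<T} s * (norm (f s))\<^sup>2))"
    by (simp add: power_mult_distrib mult.left_commute)
  then show "L2_norm_sq T (\<lambda>s. c *\<^sub>R f s) = c\<^sup>2 * L2_norm_sq T f"
    by (simp add: L2_norm_sq_altdef)
qed

lemma L2_diff_continuous_on:
  fixes f g :: "real \<Rightarrow> 'u::real_normed_vector"
  assumes f: "continuous_on {0<..<T} f" "L2 T f" and g: "continuous_on {0<..<T} g" "L2 T g"
  shows "L2 T (\<lambda>s. f s - g s)"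
proof -
  define I where "I = {0<..<T::real}"
  have meas: "(\<lambda>s. indicator I s *\<^sub>R (f s - g s)) \<in> borel_measurable lborel"
    using borel_measurable_continuous_on_indicator[of I "\<lambda>s. f s - g s"] f(1) g(1)
    by (simp add: I_def continuous_on_diff)
  have "integrable lborel (\<lambda>s. indicator I s * (norm (f s - g s))\<^sup>2)"
  proof (rule Bochner_Integration.integrable_bound)
    show "integrable lborel (\<lambda>s. 2 * (indicator I s * (norm (f s))\<^sup>2) + 2 * (indicator I s * (norm (g s))\<^sup>2))"
      unfolding I_def
      by (intro Bochner_Integration.integrable_add integrable_mult_right L2_imp_integrable_norm_sq f g)
    have sq: "indicator I s * (norm (f s - g s))\<^sup>2 = (norm (indicator I s *\<^sub>R (f s - g s)))\<^sup>2" for s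
      by (simp add: indicator_def)
    show "(\<lambda>s. indicator I s * (norm (f s - g s))\<^sup>2) \<in> borel_measurable lborel"
      unfolding sq using meas by measurable
    have "(norm (f s - g s))\<^sup>2 \<le> 2 * (norm (f s))\<^sup>2 + 2 * (norm (g s))\<^sup>2" for s
    proof -
      have "norm (f s - g s) \<le> norm (f s) + norm (g s)" by (rule norm_triangle_ineq4)
      then have "(norm (f s - g s))\<^sup>2 \<le> (norm (f s) + norm (g s))\<^sup>2" by (simp add: power_mono)
      also have "\<dots> \<le> 2 * (norm (f s))\<^sup>2 + 2 * (norm (g s))\<^sup>2"
        using sum_squares_bound[of "norm (f s)" "norm (g s)"] by (simp add: power2_eq_square algebra_simps)
      finally show ?thesis .
    qed
    then show "AE s in lborel. norm (indicator I s * (norm (f s - g s))\<^sup>2)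
        \<le> norm (2 * (indicator I s * (norm (f s))\<^sup>2) + 2 * (indicator I s * (norm (g s))\<^sup>2))"
      by (intro AE_I2) (simp add: indicator_def)
  qed
  with meas show ?thesis by (simp add: L2_def set_borel_measurable_def set_integrable_def I_def)
qed

lemma floor_mult_div_tendsto:
  "(\<lambda>k. real_of_int \<lfloor>real (Suc k) * s\<rfloor> / real (Suc k)) \<longlonglongrightarrow> s"
proof (rule tendsto_sandwich[where f="\<lambda>k. s - 1 / real (Suc k)" and h="\<lambda>k. s"])
  have "s - 1 / real (Suc k) \<le> real_of_int \<lfloor>real (Suc k) * s\<rfloor> / real (Suc k)" for k
  proof -
    have "(real (Suc k) * s - 1) / real (Suc k) \<le> real_of_int \<lfloor>real (Suc k) * s\<rfloor> / real (Suc k)"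
      by (intro divide_right_mono) linarith+
    then show ?thesis by (simp add: diff_divide_distrib)
  qed
  moreover have "real_of_int \<lfloor>real (Suc k) * s\<rfloor> / real (Suc k) \<le> s" for k
  proof -
    have "real_of_int \<lfloor>real (Suc k) * s\<rfloor> \<le> real (Suc k) * s" by linarith
    then show ?thesis by (simp add: field_simps)
  qed
  ultimately show "\<forall>\<^sub>F k in sequentially. s - 1 / real (Suc k) \<le> real_of_int \<lfloor>real (Suc k) * s\<rfloor> / real (Suc k)"
    and "\<forall>\<^sub>F k in sequentially. real_of_int \<lfloor>real (Suc k) * s\<rfloor> / real (Suc k) \<le> s"
    by simp_all
  show "(\<lambda>k. s - 1 / real (Suc k)) \<longlonglongrightarrow> s"
    using tendsto_diff[OF tendsto_const LIMSEQ_inverse_real_of_nat, of s]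
    by (simp add: inverse_eq_divide)
qed simp

lemma borel_measurable_inner_floor_grid:
  fixes f p :: "real \<Rightarrow> 'u::real_inner"
  assumes f: "f \<in> borel_measurable lborel"
  shows "(\<lambda>s. inner (f s) (p (real_of_int \<lfloor>c * s\<rfloor> / c))) \<in> borel_measurable lborel"
proof -
  have "(\<lambda>s. inner (f s) (p (real_of_int i / c))) \<in> borel_measurable lborel" for i :: int
  proof -
    have "(\<lambda>u. inner u (p (real_of_int i / c))) \<in> borel_measurable borel"
      by (intro borel_measurable_continuous_onI continuous_intros)
    from measurable_compose[OF f this] show ?thesis .
  qed
  moreover have "(\<lambda>s. \<lfloor>c * s\<rfloor>) \<in> lborel \<rightarrow>\<^sub>M count_space UNIV" by measurable
  ultimately show ?thesis by (rule measurable_compose_countable)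
qed

text \<open>The range of \<open>'u\<close> need not be separable, so an inner product of two Borel functions
  need not be Borel. If one factor is continuous, it is the limit of the factors
  \<open>s \<mapsto> p (\<lfloor>(k + 1) s\<rfloor> / (k + 1))\<close>, which take countably many values.\<close>

lemma set_borel_measurable_inner_continuous_on:
  fixes f p :: "real \<Rightarrow> 'u::real_inner"
  assumes f: "set_borel_measurable lborel {0<..<T} f" and p: "continuous_on {0<..<T} p"
  shows "(\<lambda>s. indicator {0<..<T} s * inner (f s) (p s)) \<in> borel_measurable lborel"
proof -
  define I where "I = {0<..<T::real}"
  define fI where "fI s = indicator I s *\<^sub>R f s" for s
  have fI: "fI \<in> borel_measurable lborel"
    using f by (simp add: fI_def[abs_def] I_def set_borel_measurable_def)
  define grid where "grid k s = real_of_int \<lfloor>real (Suc k) * s\<rfloor> / real (Suc k)" for k :: nat and s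
  have step_meas: "(\<lambda>s. indicator I s * inner (fI s) (p (grid k s))) \<in> borel_measurable lborel" for k
    unfolding grid_def using borel_measurable_inner_floor_grid[OF fI, of p "real (Suc k)"]
    by (intro borel_measurable_times borel_measurable_indicator) (auto simp: I_def)
  have step_lim: "(\<lambda>k. indicator I s * inner (fI s) (p (grid k s))) \<longlonglongrightarrow> indicator I s * inner (fI s) (p s)"
    for s
  proof (cases "s \<in> I")
    case True
    have grid: "(\<lambda>k. grid k s) \<longlonglongrightarrow> s" unfolding grid_def by (rule floor_mult_div_tendsto)
    moreover have "open I" by (simp add: I_def)
    ultimately have "\<forall>\<^sub>F k in sequentially. grid k s \<in> I"
      using True by (rule topological_tendstoD)
    then have "(\<lambda>k. p (grid k s)) \<longlonglongrightarrow> p s"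
      using continuous_on_tendsto_compose[OF p[folded I_def] grid True] by blast
    then show ?thesis by (intro tendsto_intros)
  qed simp
  have "(\<lambda>s. indicator I s * inner (fI s) (p s)) \<in> borel_measurable lborel"
    by (rule borel_measurable_LIMSEQ_real[OF step_lim step_meas])
  moreover have "(\<lambda>s. indicator I s * inner (fI s) (p s)) = (\<lambda>s. indicator I s * inner (f s) (p s))"
    by (rule ext) (simp add: fI_def indicator_def)
  ultimately show ?thesis by (simp add: I_def)
qed

lemma integrable_L2_inner:
  fixes g e :: "real \<Rightarrow> 'u::real_inner"
  assumes g: "L2 T g" and e: "continuous_on {0<..<T} e" "L2 T e"
  shows "integrable lborel (\<lambda>s. indicator {0<..<T} s * inner (g s) (e s))"
proof (rule Bochner_Integration.integrable_bound)
  show "integrable lborel (\<lambda>s. (indicator {0<..<T} s * (norm (g s))\<^sup>2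
      + indicator {0<..<T} s * (norm (e s))\<^sup>2) / 2)"
    by (intro integrable_divide Bochner_Integration.integrable_add L2_imp_integrable_norm_sq g e)
  show "(\<lambda>s. indicator {0<..<T} s * inner (g s) (e s)) \<in> borel_measurable lborel"
    using g e by (intro set_borel_measurable_inner_continuous_on L2_imp_set_borel_measurable)
  show "AE s in lborel. norm (indicator {0<..<T} s * inner (g s) (e s))
      \<le> norm ((indicator {0<..<T} s * (norm (g s))\<^sup>2 + indicator {0<..<T} s * (norm (e s))\<^sup>2) / 2)"
    using abs_inner_le_weighted_norms[of 1 "g _" "e _"] by (intro AE_I2) (auto simp: indicator_def)
qed

lemma L2_inner_abs_integral_le:
  fixes g e :: "real \<Rightarrow> 'u::real_inner"
  assumes g: "L2 T g" and e: "continuous_on {0<..<T} e" "L2 T e" and t: "t > 0"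
  shows "(\<integral>s. \<bar>indicator {0<..<T} s * inner (g s) (e s)\<bar> \<partial>lborel)
    \<le> (t * L2_norm_sq T g + L2_norm_sq T e / t) / 2"
proof -
  define I where "I = {0<..<T::real}"
  have "(\<integral>s. \<bar>indicator I s * inner (g s) (e s)\<bar> \<partial>lborel)
      \<le> (\<integral>s. (t * (indicator I s * (norm (g s))\<^sup>2) + indicator I s * (norm (e s))\<^sup>2 / t) / 2 \<partial>lborel)"
  proof (rule integral_mono)
    show "integrable lborel (\<lambda>s. \<bar>indicator I s * inner (g s) (e s)\<bar>)"
      unfolding I_def using integrable_L2_inner[OF g e] by (rule integrable_abs)
    show "integrable lborel (\<lambda>s. (t * (indicator I s * (norm (g s))\<^sup>2) + indicator I s * (norm (e s))\<^sup>2 / t) / 2)"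
      unfolding I_def
      by (intro integrable_divide Bochner_Integration.integrable_add integrable_mult_right L2_imp_integrable_norm_sq g e)
    show "\<bar>indicator I s * inner (g s) (e s)\<bar>
        \<le> (t * (indicator I s * (norm (g s))\<^sup>2) + indicator I s * (norm (e s))\<^sup>2 / t) / 2" for s
      using abs_inner_le_weighted_norms[OF t, of "g s" "e s"] by (auto simp: indicator_def)
  qed
  also have "\<dots> = (t * L2_norm_sq T g + L2_norm_sq T e / t) / 2"
    using L2_imp_integrable_norm_sq[OF g] L2_imp_integrable_norm_sq[OF e(2)]
    unfolding I_def L2_norm_sq_altdef by simp
  finally show ?thesis unfolding I_def .
qed

lemma L2_inner_diff_right:
  fixes g e1 e2 :: "real \<Rightarrow> 'u::real_inner"
  assumes g: "L2 T g" and e1: "continuous_on {0<..<T} e1" "L2 T e1"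
    and e2: "continuous_on {0<..<T} e2" "L2 T e2"
  shows "L2_inner T g (\<lambda>s. e1 s - e2 s) = L2_inner T g e1 - L2_inner T g e2"
  using integrable_L2_inner[OF g e1] integrable_L2_inner[OF g e2]
  by (simp add: L2_inner_altdef inner_diff_right right_diff_distrib)

lemma L2_norm_sq_tendsto_zero_dominated:
  fixes d :: "nat \<Rightarrow> real \<Rightarrow> 'u::real_normed_vector"
  assumes L2: "\<And>n. L2 T (d n)" and bound: "\<And>n s. s \<in> {0<..<T} \<Longrightarrow> norm (d n s) \<le> K"
    and lim: "\<And>s. s \<in> {0<..<T} \<Longrightarrow> (\<lambda>n. d n s) \<longlonglongrightarrow> 0"
  shows "(\<lambda>n. L2_norm_sq T (d n)) \<longlonglongrightarrow> 0"
proof -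
  define I where "I = {0<..<T::real}"
  have "(\<lambda>n. \<integral>s. indicator I s * (norm (d n s))\<^sup>2 \<partial>lborel) \<longlonglongrightarrow> (\<integral>s. 0 \<partial>(lborel :: real measure))"
  proof (rule Bochner_Integration.integral_dominated_convergence[of "\<lambda>s. 0" lborel
        "\<lambda>n s. indicator I s * (norm (d n s))\<^sup>2" "\<lambda>s. indicator I s * K\<^sup>2"])
    show "(\<lambda>s. indicator I s * (norm (d n s))\<^sup>2) \<in> borel_measurable lborel" for n
      unfolding I_def by (intro borel_measurable_integrable L2_imp_integrable_norm_sq L2)
    show "integrable lborel (\<lambda>s. indicator I s * K\<^sup>2)"
      using L2_if_continuous_on_bounded[of T "\<lambda>s. K" "\<bar>K\<bar>"]
      unfolding I_def by (auto dest: L2_imp_integrable_norm_sq)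
    show "AE s in lborel. (\<lambda>n. indicator I s * (norm (d n s))\<^sup>2) \<longlonglongrightarrow> 0"
    proof (intro AE_I2)
      fix s
      show "(\<lambda>n. indicator I s * (norm (d n s))\<^sup>2) \<longlonglongrightarrow> 0"
      proof (cases "s \<in> I")
        case True
        have "(\<lambda>n. (norm (d n s))\<^sup>2) \<longlonglongrightarrow> 0\<^sup>2"
          using True by (intro tendsto_power tendsto_norm_zero lim) (simp add: I_def)
        then show ?thesis using True by simp
      qed simp
    qed
    show "AE s in lborel. norm (indicator I s * (norm (d n s))\<^sup>2) \<le> indicator I s * K\<^sup>2" for n
    proof (intro AE_I2)
      fix s
      show "norm (indicator I s * (norm (d n s))\<^sup>2) \<le> indicator I s * K\<^sup>2"
      proof (cases "s \<in> I")
        case True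
        then have "(norm (d n s))\<^sup>2 \<le> K\<^sup>2" using bound by (intro power_mono) (auto simp: I_def)
        then show ?thesis using True by simp
      qed simp
    qed
  qed simp
  then show ?thesis by (simp add: L2_norm_sq_altdef I_def)
qed

section \<open>Fast series and weakly bounded sequences in L2\<close>

lemma AE_summable_if_summable_integrals:
  fixes w :: "nat \<Rightarrow> 'a \<Rightarrow> real"
  assumes w: "\<And>k. integrable M (w k)" "\<And>k x. 0 \<le> w k x"
    and summable_integrals: "summable (\<lambda>k. integral\<^sup>L M (w k))"
  shows "AE x in M. summable (\<lambda>k. w k x)"
proof -
  have [measurable]: "w k \<in> borel_measurable M" for k using w(1) by (rule borel_measurable_integrable)
  have "(\<integral>\<^sup>+x. (\<Sum>k. ennreal (w k x)) \<partial>M) = (\<Sum>k. \<integral>\<^sup>+x. ennreal (w k x) \<partial>M)"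
    by (rule nn_integral_suminf) measurable
  also have "\<dots> = (\<Sum>k. ennreal (integral\<^sup>L M (w k)))"
    using nn_integral_eq_integral[OF w(1)] w(2) by simp
  also have "\<dots> \<noteq> top"
    using summable_integrals w(2) by (intro ennreal_suminf_neq_top) (auto intro: integral_nonneg_AE)
  finally have "AE x in M. (\<Sum>k. ennreal (w k x)) \<noteq> \<infinity>"
    by (intro nn_integral_PInf_AE) auto
  then show ?thesis by eventually_elim (use w(2) in \<open>auto intro: summable_suminf_not_top\<close>)
qed

text \<open>The weight \<open>2\<^sup>k\<close> makes the pointwise series converge absolutely, with
  \<open>\<parallel>\<Sum> e\<^sub>k(s)\<parallel>\<^sup>2 \<le> 2 \<Sum> 2\<^sup>k \<parallel>e\<^sub>k(s)\<parallel>\<^sup>2\<close>; if \<open>\<Sum> 2\<^sup>k \<parallel>e\<^sub>k\<parallel>\<^sup>2 < \<infinity>\<close> in \<open>L\<^sup>2\<close>, this holds almost everywhere.\<close>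

definition L2_series_sum :: "real \<Rightarrow> (nat \<Rightarrow> real \<Rightarrow> 'u::real_normed_vector) \<Rightarrow> real \<Rightarrow> 'u" where
  "L2_series_sum T e s =
    (if s \<in> {0<..<T} \<and> summable (\<lambda>k. 2^k * (norm (e k s))\<^sup>2) then \<Sum>k. e k s else 0)"

lemma L2_series_domain:
  fixes e :: "nat \<Rightarrow> real \<Rightarrow> 'u::real_normed_vector"
  assumes L2: "\<And>k. L2 T (e k)" and fast: "summable (\<lambda>k. 2^k * L2_norm_sq T (e k))"
  shows "{s. s \<in> {0<..<T} \<and> summable (\<lambda>k. 2^k * (norm (e k s))\<^sup>2)} \<in> sets lborel"
    and "AE s in lborel. s \<in> {0<..<T} \<longrightarrow> summable (\<lambda>k. 2^k * (norm (e k s))\<^sup>2)"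
proof -
  define w where "w k s = 2^k * (indicator {0<..<T} s * (norm (e k s))\<^sup>2)" for k s
  have w_int: "integrable lborel (w k)" for k
    unfolding w_def by (intro integrable_mult_right L2_imp_integrable_norm_sq L2)
  have [measurable]: "w k \<in> borel_measurable lborel" for k
    using w_int by (rule borel_measurable_integrable)
  have domain_eq: "{s. s \<in> {0<..<T} \<and> summable (\<lambda>k. 2^k * (norm (e k s))\<^sup>2)}
      = {0<..<T} \<inter> {s \<in> space lborel. Cauchy (\<lambda>n. \<Sum>k<n. w k s)}"
    by (auto simp: w_def summable_iff_convergent Cauchy_convergent_iff)
  have "{s \<in> space lborel. Cauchy (\<lambda>n. \<Sum>k<n. w k s)} \<in> sets lborel"
    unfolding metric_Cauchy_iff2 by measurable
  then show "{s. s \<in> {0<..<T} \<and> summable (\<lambda>k. 2^k * (norm (e k s))\<^sup>2)} \<in> sets lborel"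
    unfolding domain_eq by (intro sets.Int) auto
  have "AE s in lborel. summable (\<lambda>k. w k s)"
  proof (rule AE_summable_if_summable_integrals[OF w_int])
    show "0 \<le> w k s" for k s by (simp add: w_def)
    show "summable (\<lambda>k. integral\<^sup>L lborel (w k))"
      using fast by (simp add: w_def[abs_def] L2_norm_sq_altdef)
  qed
  then show "AE s in lborel. s \<in> {0<..<T} \<longrightarrow> summable (\<lambda>k. 2^k * (norm (e k s))\<^sup>2)"
    by eventually_elim (auto simp: w_def)
qed

lemma L2_series_sum_partial_sums_tendsto:
  fixes T :: real and e :: "nat \<Rightarrow> real \<Rightarrow> 'u::{real_normed_vector,complete_space}"
  defines "D \<equiv> {s. s \<in> {0<..<T} \<and> summable (\<lambda>k. 2^k * (norm (e k s))\<^sup>2)}"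
  shows "(\<lambda>n. if s \<in> D then \<Sum>k<n. e k s else 0) \<longlonglongrightarrow> L2_series_sum T e s"
proof (cases "s \<in> D")
  case True
  then have "summable (\<lambda>k. 2^k * (norm (e k s))\<^sup>2)" by (simp add: D_def)
  then have "summable (\<lambda>k. e k s)"
    by (rule summable_norm_cancel_complete[OF norm_suminf_sq_le_weighted(1)])
  then show ?thesis using True by (simp add: L2_series_sum_def D_def summable_LIMSEQ)
qed (auto simp: L2_series_sum_def D_def)

lemma borel_measurable_L2_series_sum:
  fixes e :: "nat \<Rightarrow> real \<Rightarrow> 'u::{real_normed_vector,complete_space}"
  assumes cont: "\<And>k. continuous_on {0<..<T} (e k)" and L2: "\<And>k. L2 T (e k)"
    and fast: "summable (\<lambda>k. 2^k * L2_norm_sq T (e k))"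
  shows "L2_series_sum T e \<in> borel_measurable lborel"
proof -
  define I where "I = {0<..<T::real}"
  define D where "D = {s. s \<in> I \<and> summable (\<lambda>k. 2^k * (norm (e k s))\<^sup>2)}"
  have D: "D \<in> sets borel" using L2_series_domain(1)[OF L2 fast] by (simp add: D_def I_def)
  have "(\<lambda>s. if s \<in> D then \<Sum>k<n. e k s else 0) \<in> borel_measurable lborel" for n
  proof -
    have "continuous_on I (\<lambda>s. \<Sum>k<n. e k s)" unfolding I_def by (intro continuous_on_sum cont)
    then have "(\<lambda>s. indicator I s *\<^sub>R (\<Sum>k<n. e k s)) \<in> borel_measurable borel"
      by (intro borel_measurable_continuous_on_indicator) (auto simp: I_def)
    then have "(\<lambda>s. if s \<in> D then indicator I s *\<^sub>R (\<Sum>k<n. e k s) else 0) \<in> borel_measurable borel"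
      using D by (intro measurable_If_set) auto
    moreover have "(if s \<in> D then indicator I s *\<^sub>R x else 0) = (if s \<in> D then x else 0)" for s and x :: 'u
      by (simp add: D_def)
    ultimately show ?thesis by simp
  qed
  moreover have "(\<lambda>n. if s \<in> D then \<Sum>k<n. e k s else 0) \<longlonglongrightarrow> L2_series_sum T e s" for s
    using L2_series_sum_partial_sums_tendsto[where T=T and e=e] by (simp add: D_def I_def)
  ultimately show ?thesis by (rule borel_measurable_LIMSEQ_metric)
qed

lemma L2_L2_series_sum:
  fixes e :: "nat \<Rightarrow> real \<Rightarrow> 'u::{real_normed_vector,complete_space}"
  assumes cont: "\<And>k. continuous_on {0<..<T} (e k)" and L2: "\<And>k. L2 T (e k)"
    and fast: "summable (\<lambda>k. 2^k * L2_norm_sq T (e k))"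
  shows "L2 T (L2_series_sum T e)"
proof -
  define I where "I = {0<..<T::real}"
  define D where "D = {s. s \<in> I \<and> summable (\<lambda>k. 2^k * (norm (e k s))\<^sup>2)}"
  define G where "G = L2_series_sum T e"
  define W where "W s = (\<Sum>k. 2^k * (indicator I s * (norm (e k s))\<^sup>2))" for s
  have G_meas: "G \<in> borel_measurable lborel"
    unfolding G_def by (rule borel_measurable_L2_series_sum[OF cont L2 fast])
  have AE_D: "AE s in lborel. s \<in> I \<longrightarrow> s \<in> D"
    using L2_series_domain(2)[OF L2 fast] by (simp add: D_def I_def)
  have W_int: "integrable lborel W"
    unfolding W_def
  proof (rule integrable_suminf)
    show "integrable lborel (\<lambda>s. 2^k * (indicator I s * (norm (e k s))\<^sup>2))" for k
      unfolding I_def by (intro integrable_mult_right L2_imp_integrable_norm_sq L2)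
    show "AE s in lborel. summable (\<lambda>k. norm (2^k * (indicator I s * (norm (e k s))\<^sup>2)))"
      using AE_D by eventually_elim (auto simp: D_def indicator_def)
    show "summable (\<lambda>k. \<integral>s. norm (2^k * (indicator I s * (norm (e k s))\<^sup>2)) \<partial>lborel)"
      using fast by (simp add: I_def L2_norm_sq_altdef)
  qed
  have G_outside: "G s = 0" if "s \<notin> D" for s
    using that by (auto simp: G_def L2_series_sum_def D_def I_def)
  have "AE s in lborel. norm (indicator I s * (norm (G s))\<^sup>2) \<le> norm (2 * W s)"
    using AE_D
  proof eventually_elim
    case (elim s)
    show ?case
    proof (cases "s \<in> D")
      case True
      then have "(norm (G s))\<^sup>2 \<le> 2 * W s"
        using norm_suminf_sq_le_weighted(2)[of "\<lambda>k. e k s"]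
        by (simp add: G_def L2_series_sum_def D_def W_def I_def)
      then show ?thesis using True by (auto simp: indicator_def)
    next
      case False then show ?thesis using elim by (simp add: G_outside)
    qed
  qed
  moreover have "(\<lambda>s. indicator I s * (norm (G s))\<^sup>2) \<in> borel_measurable lborel"
    using G_meas unfolding I_def by measurable
  ultimately have "integrable lborel (\<lambda>s. indicator I s * (norm (G s))\<^sup>2)"
    by (intro Bochner_Integration.integrable_bound[OF integrable_mult_right[OF W_int, of 2]])
  moreover have "(\<lambda>s. indicator I s *\<^sub>R G s) = G"
    using G_outside by (auto simp: D_def indicator_def)
  ultimately show ?thesis
    using G_meas by (simp add: L2_def set_borel_measurable_def set_integrable_def I_def G_def)
qed

lemma borel_measurable_inner_L2_series_sum:
  fixes e :: "nat \<Rightarrow> real \<Rightarrow> 'u::{real_inner,complete_space}" and g :: "real \<Rightarrow> 'u"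
  assumes cont: "\<And>k. continuous_on {0<..<T} (e k)" and L2: "\<And>k. L2 T (e k)"
    and fast: "summable (\<lambda>k. 2^k * L2_norm_sq T (e k))" and g: "L2 T g"
  shows "(\<lambda>s. indicator {0<..<T} s * inner (g s) (L2_series_sum T e s)) \<in> borel_measurable lborel"
proof -
  define I where "I = {0<..<T::real}"
  define D where "D = {s. s \<in> I \<and> summable (\<lambda>k. 2^k * (norm (e k s))\<^sup>2)}"
  have "D \<in> sets borel" using L2_series_domain(1)[OF L2 fast] by (simp add: D_def I_def)
  then have "(\<lambda>s. indicator D s * (indicator I s * inner (g s) (\<Sum>k<n. e k s))) \<in> borel_measurable lborel"
    for n
    unfolding I_def using g cont
    by (intro borel_measurable_times borel_measurable_indicator set_borel_measurable_inner_continuous_on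
        L2_imp_set_borel_measurable continuous_on_sum) auto
  moreover have "(\<lambda>n. indicator D s * (indicator I s * inner (g s) (\<Sum>k<n. e k s)))
      \<longlonglongrightarrow> indicator I s * inner (g s) (L2_series_sum T e s)" for s
  proof -
    have "(\<lambda>n. inner (g s) (if s \<in> D then \<Sum>k<n. e k s else 0)) \<longlonglongrightarrow> inner (g s) (L2_series_sum T e s)"
      using L2_series_sum_partial_sums_tendsto[where T=T and e=e]
      by (intro tendsto_intros) (simp add: D_def I_def)
    moreover have "inner (g s) (if s \<in> D then x else 0) * indicator I s = indicator D s * (indicator I s * inner (g s) x)" for x
      by (simp add: D_def indicator_def)
    moreover have "s \<notin> D \<Longrightarrow> indicator I s * inner (g s) (L2_series_sum T e s) = 0"
      by (auto simp: D_def I_def L2_series_sum_def)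
    ultimately show ?thesis
      by (cases "s \<in> D") (auto simp: D_def I_def indicator_def)
  qed
  ultimately show ?thesis unfolding I_def by (rule borel_measurable_LIMSEQ_real[rotated])
qed

lemma summable_L2_inner_series_terms:
  fixes e :: "nat \<Rightarrow> real \<Rightarrow> 'u::{real_inner,complete_space}" and g :: "real \<Rightarrow> 'u"
  assumes cont: "\<And>k. continuous_on {0<..<T} (e k)" and L2: "\<And>k. L2 T (e k)"
    and fast: "summable (\<lambda>k. 2^k * L2_norm_sq T (e k))" and g: "L2 T g"
  shows "summable (\<lambda>k. \<integral>s. norm (indicator {0<..<T} s * inner (g s) (e k s)) \<partial>lborel)"
    and "AE s in lborel. summable (\<lambda>k. norm (indicator {0<..<T} s * inner (g s) (e k s)))"
proof -
  define I where "I = {0<..<T::real}"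
  have bound: "(\<integral>s. norm (indicator I s * inner (g s) (e k s)) \<partial>lborel)
      \<le> ((1/2)^k * L2_norm_sq T g + 2^k * L2_norm_sq T (e k)) / 2" for k
  proof -
    have "(\<integral>s. norm (indicator I s * inner (g s) (e k s)) \<partial>lborel)
        \<le> ((1/2)^k * L2_norm_sq T g + L2_norm_sq T (e k) / (1/2)^k) / 2"
      using L2_inner_abs_integral_le[OF g cont L2, of "(1/2)^k"] by (simp add: I_def)
    then show ?thesis by (simp add: power_one_over mult.commute)
  qed
  have "summable (\<lambda>k. ((1/2)^k * L2_norm_sq T g + 2^k * L2_norm_sq T (e k)) / 2)"
    using summable_geometric[of "1/2::real"] fast
    by (intro summable_divide summable_add summable_mult2) simp_all
  then show "summable (\<lambda>k. \<integral>s. norm (indicator {0<..<T} s * inner (g s) (e k s)) \<partial>lborel)"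
    unfolding I_def[symmetric]
    by (rule summable_comparison_test[rotated]) (use bound in \<open>auto simp: integral_nonneg_AE\<close>)
  show "AE s in lborel. summable (\<lambda>k. norm (indicator {0<..<T} s * inner (g s) (e k s)))"
    using L2_series_domain(2)[OF L2 fast]
  proof eventually_elim
    case (elim s)
    show ?case
    proof (cases "s \<in> I")
      case True
      then have "summable (\<lambda>k. norm (g s) * norm (e k s))"
        using elim norm_suminf_sq_le_weighted(1)[of "\<lambda>k. e k s"] by (intro summable_mult) (simp add: I_def)
      then show ?thesis
        by (rule summable_comparison_test[rotated]) (use True in \<open>auto simp: I_def Cauchy_Schwarz_ineq2\<close>)
    qed (simp add: I_def)
  qed
qed

lemma L2_inner_L2_series_sum:
  fixes e :: "nat \<Rightarrow> real \<Rightarrow> 'u::{real_inner,complete_space}" and g :: "real \<Rightarrow> 'u"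
  assumes cont: "\<And>k. continuous_on {0<..<T} (e k)" and L2: "\<And>k. L2 T (e k)"
    and fast: "summable (\<lambda>k. 2^k * L2_norm_sq T (e k))" and g: "L2 T g"
  shows "summable (\<lambda>k. \<bar>L2_inner T g (e k)\<bar>)"
    and "L2_inner T g (L2_series_sum T e) = (\<Sum>k. L2_inner T g (e k))"
proof -
  define f where "f k s = indicator {0<..<T} s * inner (g s) (e k s)" for k s
  have f_int: "integrable lborel (f k)" for k
    unfolding f_def by (rule integrable_L2_inner[OF g cont L2])
  have L2_inner_e: "L2_inner T g (e k) = (\<integral>s. f k s \<partial>lborel)" for k
    by (simp add: L2_inner_altdef f_def)
  note f_summable = summable_L2_inner_series_terms(1)[OF cont L2 fast g, folded f_def]
    and AE_f = summable_L2_inner_series_terms(2)[OF cont L2 fast g, folded f_def]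
  show "summable (\<lambda>k. \<bar>L2_inner T g (e k)\<bar>)"
    using f_summable by (rule summable_comparison_test[rotated]) (auto simp: L2_inner_e integral_norm_bound)
  have "L2_inner T g (L2_series_sum T e) = (\<integral>s. (\<Sum>k. f k s) \<partial>lborel)"
    unfolding L2_inner_altdef
  proof (rule integral_cong_AE)
    show "(\<lambda>s. indicator {0<..<T} s * inner (g s) (L2_series_sum T e s)) \<in> borel_measurable lborel"
      by (rule borel_measurable_inner_L2_series_sum[OF cont L2 fast g])
    show "(\<lambda>s. \<Sum>k. f k s) \<in> borel_measurable lborel"
      using integrable_suminf[OF f_int AE_f f_summable] by (rule borel_measurable_integrable)
    show "AE s in lborel. indicator {0<..<T} s * inner (g s) (L2_series_sum T e s) = (\<Sum>k. f k s)"
      using L2_series_domain(2)[OF L2 fast]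
    proof eventually_elim
      case (elim s)
      show ?case
      proof (cases "s \<in> {0<..<T}")
        case True
        then have "summable (\<lambda>k. 2^k * (norm (e k s))\<^sup>2)" using elim by simp
        then have "summable (\<lambda>k. e k s)"
          by (rule summable_norm_cancel_complete[OF norm_suminf_sq_le_weighted(1)])
        then have "inner (g s) (\<Sum>k. e k s) = (\<Sum>k. inner (g s) (e k s))"
          by (rule bounded_linear.suminf[OF bounded_linear_inner_right])
        then show ?thesis using True elim by (simp add: L2_series_sum_def f_def)
      qed (simp add: f_def)
    qed
  qed
  also have "\<dots> = (\<Sum>k. L2_inner T g (e k))"
    unfolding L2_inner_e by (rule integral_suminf[OF f_int AE_f f_summable])
  finally show "L2_inner T g (L2_series_sum T e) = (\<Sum>k. L2_inner T g (e k))" .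
qed

lemma L2_inner_fast_sequence_bounded:
  fixes fs e :: "nat \<Rightarrow> real \<Rightarrow> 'u::{real_inner,complete_space}"
  assumes fs: "\<And>n. L2 T (fs n)"
    and weakly_bounded: "\<And>g. L2 T g \<Longrightarrow> bounded (range (\<lambda>n. L2_inner T (fs n) g))"
    and cont: "\<And>k. continuous_on {0<..<T} (e k)" and L2: "\<And>k. L2 T (e k)"
    and fast: "summable (\<lambda>k. 2^k * L2_norm_sq T (e k))"
  obtains C where "\<And>n k. \<bar>L2_inner T (fs n) (e k)\<bar> \<le> C"
proof (rule gliding_hump[of "\<lambda>n k. L2_inner T (fs n) (e k)"])
  show "summable (\<lambda>k. \<bar>L2_inner T (fs n) (e k)\<bar>)" for n
    by (rule L2_inner_L2_series_sum(1)[OF cont L2 fast fs])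
  show "bounded (range (\<lambda>n. \<Sum>k. if k \<in> P then L2_inner T (fs n) (e k) else 0))" for P
  proof -
    define eP where "eP k = (if k \<in> P then e k else (\<lambda>s. 0))" for k
    have zero: "continuous_on {0<..<T} (\<lambda>s. 0::'u)" "L2 T (\<lambda>s. 0::'u)" "L2_norm_sq T (\<lambda>s. 0::'u) = 0"
      by (auto intro: L2_if_continuous_on_bounded[of _ _ 0] simp: L2_norm_sq_altdef)
    have cont_P: "continuous_on {0<..<T} (eP k)" and L2_P: "L2 T (eP k)" for k
      using cont L2 zero by (simp_all add: eP_def)
    have fast_P: "summable (\<lambda>k. 2^k * L2_norm_sq T (eP k))"
      by (rule summable_comparison_test[OF _ fast])
        (auto simp: eP_def zero L2_norm_sq_nonneg)
    have "L2_inner T (fs n) (eP k) = (if k \<in> P then L2_inner T (fs n) (e k) else 0)" for n k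
      by (simp add: eP_def L2_inner_zero_right)
    then have sums_eq: "(\<lambda>n. \<Sum>k. if k \<in> P then L2_inner T (fs n) (e k) else 0)
        = (\<lambda>n. L2_inner T (fs n) (L2_series_sum T eP))"
      using L2_inner_L2_series_sum(2)[OF cont_P L2_P fast_P fs] by simp
    show ?thesis unfolding sums_eq by (rule weakly_bounded[OF L2_L2_series_sum[OF cont_P L2_P fast_P]])
  qed
qed (rule that)

lemma L2_inner_rescaled_bounded:
  fixes fs d :: "nat \<Rightarrow> real \<Rightarrow> 'u::{real_inner,complete_space}"
  assumes fs: "\<And>n. L2 T (fs n)"
    and weakly_bounded: "\<And>g. L2 T g \<Longrightarrow> bounded (range (\<lambda>n. L2_inner T (fs n) g))"
    and cont: "\<And>k. continuous_on {0<..<T} (d k)" and L2: "\<And>k. L2 T (d k)"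
    and small: "\<And>k. L2_norm_sq T (d k) \<le> (1/16)^k"
  obtains C where "\<And>n k. 2^k * \<bar>L2_inner T (fs n) (d k)\<bar> \<le> C"
proof -
  define e where "e k s = (2::real)^k *\<^sub>R d k s" for k s
  have cont_e: "continuous_on {0<..<T} (e k)" for k
    unfolding e_def by (intro continuous_intros cont)
  have L2_e: "L2 T (e k)" and norm_e: "L2_norm_sq T (e k) = 4^k * L2_norm_sq T (d k)" for k
  proof -
    have "((2::real)^k)\<^sup>2 = 4^k" by (simp add: power2_eq_square flip: power_mult_distrib)
    then show "L2 T (e k)" "L2_norm_sq T (e k) = 4^k * L2_norm_sq T (d k)"
      using L2_scaleR[OF L2[of k], of "2^k"] by (simp_all add: e_def[abs_def])
  qed
  have "2^k * L2_norm_sq T (e k) \<le> (1/2)^k" for k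
  proof -
    have "2^k * L2_norm_sq T (e k) \<le> 2^k * 4^k * (1/16::real)^k"
      using small[of k] by (simp add: norm_e)
    also have "\<dots> = (1/2)^k" by (simp add: power_mult_distrib[symmetric])
    finally show ?thesis .
  qed
  then have fast: "summable (\<lambda>k. 2^k * L2_norm_sq T (e k))"
    by (intro summable_comparison_test[OF _ summable_geometric[of "1/2::real"]])
      (auto simp: L2_norm_sq_nonneg)
  obtain C where C: "\<And>n k. \<bar>L2_inner T (fs n) (e k)\<bar> \<le> C"
    using L2_inner_fast_sequence_bounded[OF fs weakly_bounded cont_e L2_e fast] by blast
  have "\<bar>L2_inner T (fs n) (e k)\<bar> = 2^k * \<bar>L2_inner T (fs n) (d k)\<bar>" for n k
    using L2_inner_scaleR_right[of T "fs n" "2^k" "d k"] by (simp add: e_def[abs_def] abs_mult)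
  then show ?thesis using C that by metis
qed

text \<open>If \<open>\<langle>f\<^sub>n, d\<^sub>n\<rangle>\<close> stayed away from \<open>0\<close>, a subsequence of the \<open>d\<^sub>n\<close> rescaled by \<open>2\<^sup>k\<close>
  would still form a fast series, so its pairings with the \<open>f\<^sub>n\<close> would be bounded by the gliding hump;
  but the rescaling makes them grow like \<open>2\<^sup>k\<close>.\<close>

lemma L2_inner_tendsto_zero_if_weakly_bounded:
  fixes fs d :: "nat \<Rightarrow> real \<Rightarrow> 'u::{real_inner,complete_space}"
  assumes fs: "\<And>n. L2 T (fs n)"
    and weakly_bounded: "\<And>g. L2 T g \<Longrightarrow> bounded (range (\<lambda>n. L2_inner T (fs n) g))"
    and cont: "\<And>n. continuous_on {0<..<T} (d n)" and L2: "\<And>n. L2 T (d n)"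
    and norm_lim: "(\<lambda>n. L2_norm_sq T (d n)) \<longlonglongrightarrow> 0"
  shows "(\<lambda>n. L2_inner T (fs n) (d n)) \<longlonglongrightarrow> 0"
proof (rule ccontr)
  assume "\<not> ?thesis"
  then obtain \<delta> where \<delta>: "\<delta> > 0" "\<And>N. \<exists>n\<ge>N. \<delta> \<le> \<bar>L2_inner T (fs n) (d n)\<bar>"
    unfolding LIMSEQ_def dist_real_def by (auto simp: not_less)
  have "\<exists>n. \<delta> \<le> \<bar>L2_inner T (fs n) (d n)\<bar> \<and> L2_norm_sq T (d n) \<le> (1/16)^k" for k
  proof -
    obtain N where "\<forall>n\<ge>N. \<bar>L2_norm_sq T (d n)\<bar> < (1/16)^k"
      using norm_lim unfolding LIMSEQ_def dist_real_def
      by (metis diff_zero zero_less_power zero_less_divide_1_iff zero_less_numeral)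
    moreover obtain n where "n \<ge> N" "\<delta> \<le> \<bar>L2_inner T (fs n) (d n)\<bar>" using \<delta>(2) by blast
    ultimately show ?thesis by (intro exI[of _ n]) auto
  qed
  then obtain m where m: "\<And>k. \<delta> \<le> \<bar>L2_inner T (fs (m k)) (d (m k))\<bar>"
    "\<And>k. L2_norm_sq T (d (m k)) \<le> (1/16)^k"
    by metis
  obtain C where C: "\<And>n k. 2^k * \<bar>L2_inner T (fs n) (d (m k))\<bar> \<le> C"
    using L2_inner_rescaled_bounded[where d="\<lambda>k. d (m k)", OF fs weakly_bounded cont L2 m(2)] by blast
  obtain k :: nat where k: "C / \<delta> < real k" using reals_Archimedean2 by blast
  have "C < \<delta> * real k" using k \<delta>(1) by (simp add: field_simps)
  also have "\<dots> < \<delta> * 2^k" using \<delta>(1) of_nat_less_two_power[of k] by simp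
  also have "\<dots> \<le> 2^k * \<bar>L2_inner T (fs (m k)) (d (m k))\<bar>"
    using m(1)[of k] by (simp add: mult.commute)
  finally show False using C[where n="m k" and k=k] by linarith
qed

lemma L2_inner_weak_strong_tendsto:
  fixes fs hs :: "nat \<Rightarrow> real \<Rightarrow> 'u::{real_inner,complete_space}"
  assumes fs: "\<And>n. L2 T (fs n)"
    and weak: "\<And>g. L2 T g \<Longrightarrow> (\<lambda>n. L2_inner T (fs n) g) \<longlonglongrightarrow> L2_inner T f g"
    and hs: "\<And>n. continuous_on {0<..<T} (hs n)" "\<And>n. L2 T (hs n)"
    and h: "continuous_on {0<..<T} h" "L2 T h"
    and strong: "(\<lambda>n. L2_norm_sq T (\<lambda>s. hs n s - h s)) \<longlonglongrightarrow> 0"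
  shows "(\<lambda>n. L2_inner T (fs n) (hs n)) \<longlonglongrightarrow> L2_inner T f h"
proof -
  have diff: "continuous_on {0<..<T} (\<lambda>s. hs n s - h s)" "L2 T (\<lambda>s. hs n s - h s)" for n
    using hs h by (auto intro: continuous_on_diff L2_diff_continuous_on)
  have "L2_inner T (fs n) (hs n) = L2_inner T (fs n) h + L2_inner T (fs n) (\<lambda>s. hs n s - h s)" for n
    using L2_inner_diff_right[OF fs hs(1,2) h, of n n] by simp
  moreover have "(\<lambda>n. L2_inner T (fs n) (\<lambda>s. hs n s - h s)) \<longlonglongrightarrow> 0"
  proof (rule L2_inner_tendsto_zero_if_weakly_bounded[OF fs _ diff strong])
    fix g :: "real \<Rightarrow> 'u" assume "L2 T g"
    then show "bounded (range (\<lambda>n. L2_inner T (fs n) g))"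
      using weak convergent_imp_Bseq[OF convergentI] by (metis Bseq_eq_bounded)
  qed
  ultimately show ?thesis using tendsto_add[OF weak[OF h(2)]] by fastforce
qed

section \<open>Semigroups and the null-control identity\<close>

lemma selfadj_semigroup_norm_le:
  assumes "selfadj_semigroup a S" "0 \<le> t" "t \<le> T"
  shows "norm (S t y) \<le> exp (\<bar>a\<bar> * T) * norm y"
proof -
  have "norm (S t y) \<le> exp (- a * t) * norm y"
    using assms by (auto simp: selfadj_semigroup_def)
  also have "\<dots> \<le> exp (\<bar>a\<bar> * T) * norm y"
  proof (intro mult_right_mono norm_ge_zero)
    have "- a * t \<le> \<bar>a\<bar> * t" using assms(2) by (intro mult_right_mono) auto
    also have "\<dots> \<le> \<bar>a\<bar> * T" using assms(3) by (intro mult_left_mono) auto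
    finally show "exp (- a * t) \<le> exp (\<bar>a\<bar> * T)" by simp
  qed
  finally show ?thesis .
qed

lemma selfadj_semigroup_continuous_on_observation:
  assumes "selfadj_semigroup a S" "bounded_linear L"
  shows "continuous_on {0<..<T} (\<lambda>s. L (S (T - s) y))"
proof -
  have "continuous_on {0..} (\<lambda>t. S t y)" using assms(1) by (simp add: selfadj_semigroup_def)
  then have "continuous_on {0<..<T} (\<lambda>s. S (T - s) y)"
    by (rule continuous_on_compose2) (auto intro: continuous_intros)
  then show ?thesis by (rule bounded_linear.continuous_on[OF assms(2)])
qed

lemma L2_observation:
  assumes S: "selfadj_semigroup a S" and L: "bounded_linear L"
  shows "L2 T (\<lambda>s. L (S (T - s) y))"
proof -
  obtain K where K: "\<And>x. norm (L x) \<le> norm x * K" "K > 0"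
    using bounded_linear.pos_bounded[OF L] by blast
  have "norm (L (S (T - s) y)) \<le> exp (\<bar>a\<bar> * T) * norm y * K" if "s \<in> {0<..<T}" for s
  proof -
    have "norm (L (S (T - s) y)) \<le> norm (S (T - s) y) * K" by (rule K(1))
    also have "\<dots> \<le> exp (\<bar>a\<bar> * T) * norm y * K"
      using selfadj_semigroup_norm_le[OF S, of "T - s" T y] that K(2) by (intro mult_right_mono) auto
    finally show ?thesis .
  qed
  then show ?thesis
    by (intro L2_if_continuous_on_bounded selfadj_semigroup_continuous_on_observation[OF S L])
qed

lemma null_control_eq_iff_L2_inner:
  assumes S: "selfadj_semigroup a S" and adj: "\<And>x z. inner (B x) z = inner x (A z)"
  shows "null_control_eq S B T u0 f
    \<longleftrightarrow> (\<forall>y. inner (S T u0) y + L2_inner T f (\<lambda>s. A (S (T - s) y)) = 0)"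
proof -
  have "inner (S (T - s) (B (f s))) y = inner (f s) (A (S (T - s) y))" if "s \<in> {0<..<T}" for s y
  proof -
    have "inner (S (T - s) (B (f s))) y = inner (B (f s)) (S (T - s) y)"
      using S that by (simp add: selfadj_semigroup_def)
    then show ?thesis by (simp add: adj)
  qed
  then have "(LINT s:{0<..<T}|lborel. inner (S (T - s) (B (f s))) y) = L2_inner T f (\<lambda>s. A (S (T - s) y))"
    for y unfolding L2_inner_def by (intro set_lebesgue_integral_cong) auto
  then show ?thesis by (simp add: null_control_eq_def)
qed

lemma observation_L2_tendsto:
  fixes S :: "real \<Rightarrow> 'h::{real_inner,complete_space} \<Rightarrow> 'h" and A :: "'h \<Rightarrow> 'u::real_normed_vector"
  assumes S: "selfadj_semigroup a S" and Sn: "\<And>n. selfadj_semigroup a (Sn n)"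
    and S_lim: "\<And>t x. t > 0 \<Longrightarrow> (\<lambda>n. Sn n t x) \<longlonglongrightarrow> S t x"
    and A: "bounded_linear A" and An: "\<And>n. bounded_linear (An n)"
    and A_lim: "\<And>x. (\<lambda>n. An n x) \<longlonglongrightarrow> A x" and An_bound: "\<And>n x. norm (An n x) \<le> C * norm x"
  shows "(\<lambda>n. L2_norm_sq T (\<lambda>s. An n (Sn n (T - s) y) - A (S (T - s) y))) \<longlonglongrightarrow> 0"
proof -
  define E where "E = exp (\<bar>a\<bar> * T) * norm y"
  obtain CA where CA: "\<And>x. norm (A x) \<le> norm x * CA" "CA > 0"
    using bounded_linear.pos_bounded[OF A] by blast
  show ?thesis
  proof (rule L2_norm_sq_tendsto_zero_dominated[where K="max C 0 * E + CA * E"])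
    show "L2 T (\<lambda>s. An n (Sn n (T - s) y) - A (S (T - s) y))" for n
      using A An S Sn
      by (intro L2_diff_continuous_on L2_observation selfadj_semigroup_continuous_on_observation)
    show "norm (An n (Sn n (T - s) y) - A (S (T - s) y)) \<le> max C 0 * E + CA * E"
      if s: "s \<in> {0<..<T}" for n s
    proof -
      have S_bound: "norm (S' (T - s) y) \<le> E" if "selfadj_semigroup a S'" for S'
        using selfadj_semigroup_norm_le[OF that, of "T - s" T y] s by (simp add: E_def)
      have "norm (An n (Sn n (T - s) y)) \<le> max C 0 * norm (Sn n (T - s) y)"
        using An_bound[of n "Sn n (T - s) y"] mult_right_mono[of C "max C 0" "norm (Sn n (T - s) y)"]
        by simp
      also have "\<dots> \<le> max C 0 * E" using S_bound[OF Sn] by (intro mult_left_mono) auto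
      finally have "norm (An n (Sn n (T - s) y)) \<le> max C 0 * E" .
      moreover have "norm (A (S (T - s) y)) \<le> norm (S (T - s) y) * CA" by (rule CA(1))
      moreover have "norm (S (T - s) y) * CA \<le> CA * E"
        using S_bound[OF S] CA(2) by (simp add: mult.commute mult_left_mono)
      moreover have "norm (An n (Sn n (T - s) y) - A (S (T - s) y))
          \<le> norm (An n (Sn n (T - s) y)) + norm (A (S (T - s) y))"
        by (rule norm_triangle_ineq4)
      ultimately show ?thesis by linarith
    qed
    show "(\<lambda>n. An n (Sn n (T - s) y) - A (S (T - s) y)) \<longlonglongrightarrow> 0" if "s \<in> {0<..<T}" for s
    proof -
      have "(\<lambda>n. Sn n (T - s) y) \<longlonglongrightarrow> S (T - s) y" using S_lim that by simp
      then have "(\<lambda>n. An n (Sn n (T - s) y)) \<longlonglongrightarrow> A (S (T - s) y)"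
        by (rule tendsto_apply_uniformly_bounded[where A=An, OF An An_bound A_lim])
      then show ?thesis by (rule LIM_zero)
    qed
  qed
qed

lemma null_control_eq_weak_limit:
  fixes S :: "real \<Rightarrow> 'h::{real_inner,complete_space} \<Rightarrow> 'h"
    and B :: "'u::{real_inner,complete_space} \<Rightarrow> 'h" and fs :: "nat \<Rightarrow> real \<Rightarrow> 'u"
  assumes S: "selfadj_semigroup a S" and Sn: "\<And>n. selfadj_semigroup a (Sn n)"
    and S_lim: "\<And>t x. t > 0 \<Longrightarrow> (\<lambda>n. Sn n t x) \<longlonglongrightarrow> S t x"
    and B: "bounded_linear B" and Bn: "\<And>n. bounded_linear (Bn n)"
    and adjoint_lim: "\<And>x. (\<lambda>n. adjoint (Bn n) x) \<longlonglongrightarrow> adjoint B x"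
    and T: "T > 0"
    and fs: "\<And>n. L2 T (fs n)" and weak: "\<And>g. L2 T g \<Longrightarrow> (\<lambda>n. L2_inner T (fs n) g) \<longlonglongrightarrow> L2_inner T f g"
    and null: "\<And>n. null_control_eq (Sn n) (Bn n) T u0 (fs n)"
  shows "null_control_eq S B T u0 f"
proof -
  have A: "bounded_linear (adjoint B)" and An: "bounded_linear (adjoint (Bn n))" for n
    using hilbert_adjoint_bounded_linear B Bn by auto
  obtain C where C: "\<And>n x. norm (adjoint (Bn n) x) \<le> C * norm x"
  proof (rule uniform_boundedness[OF An])
    show "bounded (range (\<lambda>n. adjoint (Bn n) x))" for x
      using adjoint_lim[of x] by (metis Bseq_eq_bounded convergent_imp_Bseq convergentI)
  qed (rule that)
  show ?thesis
    unfolding null_control_eq_iff_L2_inner[OF S hilbert_adjoint_works[OF B]]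
  proof
    fix y
    define h where "h s = adjoint B (S (T - s) y)" for s
    define hs where "hs n s = adjoint (Bn n) (Sn n (T - s) y)" for n s
    have "(\<lambda>n. L2_inner T (fs n) (hs n)) \<longlonglongrightarrow> L2_inner T f h"
      unfolding hs_def h_def using S Sn A An
      by (intro L2_inner_weak_strong_tendsto[OF fs weak] selfadj_semigroup_continuous_on_observation
          L2_observation observation_L2_tendsto[OF S Sn S_lim A An adjoint_lim C])
    moreover have "L2_inner T (fs n) (hs n) = - inner (Sn n T u0) y" for n
      using null[of n] unfolding null_control_eq_iff_L2_inner[OF Sn hilbert_adjoint_works[OF Bn]] hs_def
      by (simp add: eq_neg_iff_add_eq_0 add.commute)
    moreover have "(\<lambda>n. - inner (Sn n T u0) y) \<longlonglongrightarrow> - inner (S T u0) y"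
      using S_lim[OF T] by (intro tendsto_intros)
    ultimately have "L2_inner T f h = - inner (S T u0) y"
      using LIMSEQ_unique by fastforce
    then show "inner (S T u0) y + L2_inner T f (\<lambda>s. adjoint B (S (T - s) y)) = 0"
      by (simp add: h_def[abs_def])
  qed
qed

theorem corollary4p8:
  fixes a T :: real
    and S :: "real \<Rightarrow> 'h::{real_inner,complete_space} \<Rightarrow> 'h"
    and Sn :: "nat \<Rightarrow> real \<Rightarrow> 'h \<Rightarrow> 'h"
    and B :: "'u::{real_inner,complete_space} \<Rightarrow> 'h" 
    and Bn :: "nat \<Rightarrow> 'u \<Rightarrow> 'h"
    and F :: "'h \<Rightarrow> real \<Rightarrow> 'u"
    and Fn :: "nat \<Rightarrow> 'h \<Rightarrow> real \<Rightarrow> 'u"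
  assumes "selfadj_semigroup a S"
    and "\<And>n. selfadj_semigroup a (Sn n)"
    and "\<And>t x. t > 0 \<Longrightarrow> (\<lambda>n. Sn n t x) \<longlonglongrightarrow> S t x"
    and "bounded_linear B" and "\<And>n. bounded_linear (Bn n)"
    and "\<And>x. (\<lambda>n. Bn n x) \<longlonglongrightarrow> B x"
    and "\<And>x. (\<lambda>n. adjoint (Bn n) x) \<longlonglongrightarrow> adjoint B x"
    and "T > 0"
    and "\<And>n. bounded_linear_L2 T (Fn n)"
    and "\<And>n. feedback_operator (Sn n) (Bn n) T (Fn n)"
    and "\<And>u0. L2 T (F u0)"
    and "\<And>u0. L2_weak_conv T (\<lambda>n. Fn n u0) (F u0)"
  shows "feedback_operator S B T F"
  unfolding feedback_operator_def
proof
  fix u0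
  show "null_control_eq S B T u0 (F u0)"
  proof (rule null_control_eq_weak_limit[OF assms(1-5,7,8)])
    show "L2 T (Fn n u0)" for n
      using assms(9) by (simp add: bounded_linear_L2_def)
    show "(\<lambda>n. L2_inner T (Fn n u0) g) \<longlonglongrightarrow> L2_inner T (F u0) g" if "L2 T g" for g
      using assms(12) that by (simp add: L2_weak_conv_def)
    show "null_control_eq (Sn n) (Bn n) T u0 (Fn n u0)" for n
      using assms(10) by (simp add: feedback_operator_def)
  qed
qed

end
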